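(* Let $K$ be an algebraically closed field of characteristic zero and $e_1\in 3+2\mathbb{N}$. Let $S\subset K^3$ be the surface $x_3^2+(x_1^{e_1}-x_2^2)x_1=0$, $S'\subset K^3$ the surface $\alpha^{2e_1}-4\beta\gamma=0$, $\sigma(\alpha,\beta,\gamma)=(-\alpha,\gamma,\beta)$ on $S'$ with $\sigma^*(f)=f\circ\sigma$, and identify $\mathcal{O}(S)$ with a subring of $\mathcal{O}(S')$ via the dominant morphism $F(\alpha,\beta,\gamma)=(\alpha^2,\beta+\gamma,\alpha(\beta-\gamma))$. Then for every $K$-derivation $D$ of $\mathcal{O}(S)$ there exists a unique derivation $D'$ of $\mathcal{O}(S')$ commuting with $\sigma^*$ and coinciding with $D$ on $\mathcal{O}(S)$. Moreover, if $D$ is weighted homogeneous on $S$ then $D'$ is weighted homogeneous on $S'$.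
   Context: $S$ is graded by the weights $2,e_1,e_1+1$ on $x_1,x_2,x_3$, and $S'$ by the weights $1,e_1,e_1$ on $\alpha,\beta,\gamma$. A derivation is weighted homogeneous (of degree $r$) if it sends homogeneous elements of degree $m$ to homogeneous elements of degree $m+r$. *)

theory Defs
  imports "HOL-Computational_Algebra.Polynomial"
begin

type_synonym 'a pt3 = "'a \<times> 'a \<times> 'a"

definition fin_supp :: "(nat \<times> nat \<times> nat \<Rightarrow> 'a::zero) \<Rightarrow> bool" where
  "fin_supp c \<longleftrightarrow> finite {k. c k \<noteq> 0}"

definition peval3 :: "(nat \<times> nat \<times> nat \<Rightarrow> 'a::comm_ring_1) \<Rightarrow> 'a pt3 \<Rightarrow> 'a" where
  "peval3 c p = (\<Sum>(i,j,k)\<in>{k. c k \<noteq> 0}. c (i,j,k) * fst p ^ i * fst (snd p) ^ j * snd (snd p) ^ k)"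

text \<open>The coordinate ring of a subset S of K^3: polynomial functions restricted to S
  (extended by 0 outside S, so that equal elements are equal as HOL functions).\<close>

definition restr :: "'a pt3 set \<Rightarrow> ('a pt3 \<Rightarrow> 'a::zero) \<Rightarrow> 'a pt3 \<Rightarrow> 'a" where
  "restr S g = (\<lambda>p. if p \<in> S then g p else 0)"

definition coord_ring :: "'a::comm_ring_1 pt3 set \<Rightarrow> ('a pt3 \<Rightarrow> 'a) set" where
  "coord_ring S = {restr S (peval3 c) | c. fin_supp c}"

definition whom :: "'a::comm_ring_1 pt3 set \<Rightarrow> nat \<times> nat \<times> nat \<Rightarrow> int \<Rightarrow> ('a pt3 \<Rightarrow> 'a) \<Rightarrow> bool" where
  "whom S w m f \<longleftrightarrow> (\<exists>c. fin_supp c \<and>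
      (\<forall>i j k. c (i,j,k) \<noteq> 0 \<longrightarrow> int (fst w * i + fst (snd w) * j + snd (snd w) * k) = m) \<and>
      f = restr S (peval3 c))"

definition is_derivation :: "'a::comm_ring_1 pt3 set \<Rightarrow> (('a pt3 \<Rightarrow> 'a) \<Rightarrow> ('a pt3 \<Rightarrow> 'a)) \<Rightarrow> bool" where
  "is_derivation S D \<longleftrightarrow>
     (\<forall>f\<in>coord_ring S. D f \<in> coord_ring S) \<and>
     (\<forall>f\<in>coord_ring S. \<forall>g\<in>coord_ring S. D (\<lambda>p. f p + g p) = (\<lambda>p. D f p + D g p)) \<and>
     (\<forall>a. \<forall>f\<in>coord_ring S. D (\<lambda>p. a * f p) = (\<lambda>p. a * D f p)) \<and>
     (\<forall>f\<in>coord_ring S. \<forall>g\<in>coord_ring S. D (\<lambda>p. f p * g p) = (\<lambda>p. f p * D g p + g p * D f p))"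

definition whom_derivation :: "'a::comm_ring_1 pt3 set \<Rightarrow> nat \<times> nat \<times> nat \<Rightarrow> (('a pt3 \<Rightarrow> 'a) \<Rightarrow> ('a pt3 \<Rightarrow> 'a)) \<Rightarrow> bool" where
  "whom_derivation S w D \<longleftrightarrow> (\<exists>r::int. \<forall>m f. whom S w m f \<longrightarrow> whom S w (m + r) (D f))"

definition surfS :: "nat \<Rightarrow> 'a::comm_ring_1 pt3 set" where
  "surfS e1 = {(x1,x2,x3). x3^2 + (x1^e1 - x2^2) * x1 = 0}"

definition surfS' :: "nat \<Rightarrow> 'a::comm_ring_1 pt3 set" where
  "surfS' e1 = {(a,b,c). a^(2*e1) - 4*b*c = 0}"

definition sigma :: "'a::comm_ring_1 pt3 \<Rightarrow> 'a pt3" where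
  "sigma = (\<lambda>(a,b,c). (-a, c, b))"

definition mapF :: "'a::comm_ring_1 pt3 \<Rightarrow> 'a pt3" where
  "mapF = (\<lambda>(a,b,c). (a^2, b + c, a * (b - c)))"

definition sigma_star :: "nat \<Rightarrow> ('a::comm_ring_1 pt3 \<Rightarrow> 'a) \<Rightarrow> 'a pt3 \<Rightarrow> 'a" where
  "sigma_star e1 f = restr (surfS' e1) (f \<circ> sigma)"

definition F_star :: "nat \<Rightarrow> ('a::comm_ring_1 pt3 \<Rightarrow> 'a) \<Rightarrow> 'a pt3 \<Rightarrow> 'a" where
  "F_star e1 f = restr (surfS' e1) (f \<circ> mapF)"

end

theory Submission
  imports Defs
begin

text \<open>A derivation D of O(S) is determined by the images A, B, C of the coordinate
  functions, and (A, B, C) is a polynomial vector field tangent to S. The lift is the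
  derivation of O(S') given by a polynomial vector field (u, v, w) tangent to S' whose
  push-forward along F is (A, B, C), i.e. on S'
    2 \<alpha> u = A \<circ> F,   v + w = B \<circ> F,   \<alpha> (v - w) + (\<beta> - \<gamma>) u = C \<circ> F.
  Tangency forces A to vanish on the x2-axis, so A = x1 g1 + x3 g3 and
  u = (\<alpha> g1 \<circ> F + (\<beta> - \<gamma>) g3 \<circ> F) / 2. The pulled-back tangency condition then shows that
  E = C \<circ> F - (\<beta> - \<gamma>) u vanishes on S' \<inter> {\<alpha> = 0}, hence E = \<alpha> E1 on S' because
  \<beta> \<gamma> = \<alpha>^(2 e1) / 4 there, and v, w = (B \<circ> F \<plusminus> E1) / 2. Choosing u and E1 odd under \<sigma>
  makes the field \<sigma>-equivariant, and tangency of (u, v, w) to S' again follows from the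
  tangency of (A, B, C) to S. The three relations determine u, v, w on S' (divide by \<alpha>),
  which gives uniqueness, and every step respects the weights, which gives homogeneity.
  Identities on S' are always checked where \<alpha> \<noteq> 0 (or \<beta> \<noteq> 0) and extended to all of
  S' along polynomial curves, using only that K is infinite.\<close>

section \<open>Polynomial functions\<close>

inductive whpoly :: "nat \<times> nat \<times> nat \<Rightarrow> int \<Rightarrow> ('a::comm_ring_1 pt3 \<Rightarrow> 'a) \<Rightarrow> bool"
  for w :: "nat \<times> nat \<times> nat" where
  zero: "whpoly w m (\<lambda>_. 0)"
| const: "whpoly w 0 (\<lambda>_. k)"
| fst: "whpoly w (int (fst w)) (\<lambda>p. fst p)"
| fst_snd: "whpoly w (int (fst (snd w))) (\<lambda>p. fst (snd p))"
| snd_snd: "whpoly w (int (snd (snd w))) (\<lambda>p. snd (snd p))"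
| add: "whpoly w m f \<Longrightarrow> whpoly w m g \<Longrightarrow> whpoly w m (\<lambda>p. f p + g p)"
| mult: "whpoly w m f \<Longrightarrow> whpoly w n g \<Longrightarrow> whpoly w (m + n) (\<lambda>p. f p * g p)"

abbreviation polyfun :: "('a::comm_ring_1 pt3 \<Rightarrow> 'a) \<Rightarrow> bool" where
  "polyfun f \<equiv> whpoly (0,0,0) 0 f"

lemma whpoly_fst': "m = int (fst w) \<Longrightarrow> whpoly w m (\<lambda>p. fst p)"
  using whpoly.fst by simp

lemma whpoly_fst_snd': "m = int (fst (snd w)) \<Longrightarrow> whpoly w m (\<lambda>p. fst (snd p))"
  using whpoly.fst_snd by simp

lemma whpoly_snd_snd': "m = int (snd (snd w)) \<Longrightarrow> whpoly w m (\<lambda>p. snd (snd p))"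
  using whpoly.snd_snd by simp

lemma whpoly_mult': "whpoly w m f \<Longrightarrow> whpoly w n g \<Longrightarrow> k = m + n \<Longrightarrow> whpoly w k (\<lambda>p. f p * g p)"
  using whpoly.mult by blast

lemma whpoly_polyfun: "whpoly w m f \<Longrightarrow> polyfun f"
proof (induction rule: whpoly.induct)
  case (mult m f n g)
  then show ?case using whpoly.mult[of "(0,0,0)" 0 f 0 g] by simp
qed (auto intro: whpoly.intros whpoly_fst' whpoly_fst_snd' whpoly_snd_snd')

lemma whpoly_scale: "whpoly w m f \<Longrightarrow> whpoly w m (\<lambda>p. c * f p)"
  using whpoly_mult'[OF whpoly.const[of w c]] by auto

lemma whpoly_uminus: "whpoly w m f \<Longrightarrow> whpoly w m (\<lambda>p. - f p)"
  using whpoly_scale[of w m f "-1"] by simp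

lemma whpoly_diff: "whpoly w m f \<Longrightarrow> whpoly w m g \<Longrightarrow> whpoly w m (\<lambda>p. f p - g p)"
  using whpoly.add[OF _ whpoly_uminus[of w m g]] by simp

lemma whpoly_power: "whpoly w m f \<Longrightarrow> k = int n * m \<Longrightarrow> whpoly w k (\<lambda>p. f p ^ n)"
proof (induction n arbitrary: k)
  case 0
  then show ?case using whpoly.const[of w 1] by simp
next
  case (Suc n)
  have "whpoly w (m + int n * m) (\<lambda>p. f p * f p ^ n)"
    using whpoly.mult[OF Suc.prems(1) Suc.IH[OF Suc.prems(1) refl]] .
  then show ?case using Suc.prems by (simp add: algebra_simps)
qed

lemma whpoly_sum:
  "finite A \<Longrightarrow> (\<And>i. i \<in> A \<Longrightarrow> whpoly w m (g i)) \<Longrightarrow> whpoly w m (\<lambda>p. \<Sum>i\<in>A. g i p)"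
proof (induction A rule: finite_induct)
  case empty
  then show ?case using whpoly.zero by simp
next
  case (insert x F)
  then show ?case using whpoly.add[of w m "g x" "\<lambda>p. \<Sum>i\<in>F. g i p"] by simp
qed

lemma polyfun_mult: "polyfun f \<Longrightarrow> polyfun g \<Longrightarrow> polyfun (\<lambda>p. f p * g p)"
  using whpoly.mult[of "(0,0,0)" 0 f 0 g] by simp

lemma polyfun_power: "polyfun f \<Longrightarrow> polyfun (\<lambda>p. f p ^ n)"
  using whpoly_power[of "(0,0,0)" 0 f 0 n] by simp

lemma polyfun_fst: "polyfun (\<lambda>p. fst p)"
  and polyfun_fst_snd: "polyfun (\<lambda>p. fst (snd p))"
  and polyfun_snd_snd: "polyfun (\<lambda>p. snd (snd p))"
  by (auto intro: whpoly_fst' whpoly_fst_snd' whpoly_snd_snd')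

lemmas polyfun_intros = whpoly.add polyfun_mult whpoly_diff whpoly_uminus polyfun_power
  polyfun_fst polyfun_fst_snd polyfun_snd_snd whpoly.const

lemma whpoly_comp:
  assumes "whpoly w m f" "whpoly w' (int (fst w)) G1" "whpoly w' (int (fst (snd w))) G2"
    "whpoly w' (int (snd (snd w))) G3"
  shows "whpoly w' m (\<lambda>x. f (G1 x, G2 x, G3 x))"
  using assms(1)
  by induction (use assms(2-4) whpoly.mult in \<open>auto intro: whpoly.intros\<close>)

lemma polyfun_comp:
  "polyfun f \<Longrightarrow> polyfun G1 \<Longrightarrow> polyfun G2 \<Longrightarrow> polyfun G3 \<Longrightarrow> polyfun (\<lambda>x. f (G1 x, G2 x, G3 x))"
  using whpoly_comp[of "(0,0,0)" 0 f "(0,0,0)" G1 G2 G3] by simp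

lemma polyfun_along_poly_curve:
  assumes "whpoly w m f"
  shows "\<exists>r. \<forall>t. f (poly x t, poly y t, poly z t) = poly r t"
  using assms
proof (induction rule: whpoly.induct)
  case (zero m)
  show ?case by (intro exI[of _ 0]) simp
next
  case (const k)
  show ?case by (intro exI[of _ "[:k:]"]) simp
next
  case fst
  show ?case by (intro exI[of _ x]) simp
next
  case fst_snd
  show ?case by (intro exI[of _ y]) simp
next
  case snd_snd
  show ?case by (intro exI[of _ z]) simp
next
  case (add m f g)
  then obtain r1 r2 where "\<forall>t. f (poly x t, poly y t, poly z t) = poly r1 t"
    "\<forall>t. g (poly x t, poly y t, poly z t) = poly r2 t" by blast
  then show ?case by (intro exI[of _ "r1 + r2"]) simp
next
  case (mult m f n g)
  then obtain r1 r2 where "\<forall>t. f (poly x t, poly y t, poly z t) = poly r1 t"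
    "\<forall>t. g (poly x t, poly y t, poly z t) = poly r2 t" by blast
  then show ?case by (intro exI[of _ "r1 * r2"]) simp
qed

lemma poly_0_eq_0_of_vanishes_off_0:
  fixes r :: "'a::field_char_0 poly"
  assumes "\<forall>t. t \<noteq> 0 \<longrightarrow> poly r t = 0"
  shows "poly r 0 = 0"
proof (cases "r = 0")
  case False
  then have "finite {t. poly r t = 0}" by (rule poly_roots_finite)
  moreover have "UNIV - {0} \<subseteq> {t. poly r t = 0}" using assms by auto
  ultimately have "finite (UNIV - {0::'a})" by (rule rev_finite_subset)
  then show ?thesis using infinite_UNIV_char_0 by (metis finite_Diff2 finite.emptyI finite_insert)
qed simp

text \<open>A polynomial function vanishing along a polynomial curve off the parameter 0 also
  vanishes at the point of parameter 0: this replaces every Zariski-closure argument below.\<close>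

lemma polyfun_vanishes_at_curve_0:
  fixes g :: "'a::field_char_0 pt3 \<Rightarrow> 'a"
  assumes "polyfun g" "\<forall>t. t \<noteq> 0 \<longrightarrow> g (poly x t, poly y t, poly z t) = 0"
  shows "g (poly x 0, poly y 0, poly z 0) = 0"
proof -
  obtain r where r: "\<forall>t. g (poly x t, poly y t, poly z t) = poly r t"
    using polyfun_along_poly_curve[OF assms(1)] by blast
  have "poly r 0 = 0" using assms(2) r by (intro poly_0_eq_0_of_vanishes_off_0) auto
  then show ?thesis using r by simp
qed

section \<open>Directional derivatives\<close>

definition line3 :: "'a::comm_ring_1 pt3 \<Rightarrow> 'a pt3 \<Rightarrow> 'a \<Rightarrow> 'a pt3" where
  "line3 p q t = (poly [:fst p, fst q:] t, poly [:fst (snd p), fst (snd q):] t,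
                  poly [:snd (snd p), snd (snd q):] t)"

definition dderiv :: "('a::comm_ring_1 pt3 \<Rightarrow> 'a) \<Rightarrow> 'a pt3 \<Rightarrow> 'a pt3 \<Rightarrow> 'a" where
  "dderiv f p q = coeff (THE r. \<forall>t. f (line3 p q t) = poly r t) 1"

lemma polyfun_along_line3: "whpoly w m f \<Longrightarrow> \<exists>r. \<forall>t. f (line3 p q t) = poly r t"
  unfolding line3_def by (rule polyfun_along_poly_curve)

lemma dderiv_eqI:
  fixes f :: "'a::field_char_0 pt3 \<Rightarrow> 'a"
  assumes "whpoly w m f" "\<forall>t. f (line3 p q t) = poly r t"
  shows "dderiv f p q = coeff r 1"
proof -
  have "(THE r. \<forall>t. f (line3 p q t) = poly r t) = r"
  proof (rule the_equality)
    fix r' assume "\<forall>t. f (line3 p q t) = poly r' t"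
    then have "poly r' = poly r" using assms(2) by auto
    then show "r' = r" by (simp add: poly_eq_poly_eq_iff)
  qed (use assms in auto)
  then show ?thesis by (simp add: dderiv_def)
qed

lemma line3_0: "line3 p q 0 = p"
  by (simp add: line3_def)

lemma coeff_0_of_line3: "\<forall>t. f (line3 p q t) = poly r t \<Longrightarrow> coeff r 0 = f p"
  by (metis line3_0 poly_0_coeff_0)

lemma dderiv_const [simp]: "dderiv (\<lambda>_. k) p q = (0::'a::field_char_0)"
  using dderiv_eqI[OF whpoly.const, where p=p and q=q and r="[:k:]"] by simp

lemma dderiv_fst [simp]: "dderiv (\<lambda>x. fst x) p q = fst (q::'a::field_char_0 pt3)"
  and dderiv_fst_snd [simp]: "dderiv (\<lambda>x. fst (snd x)) p q = fst (snd q)"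
  and dderiv_snd_snd [simp]: "dderiv (\<lambda>x. snd (snd x)) p q = snd (snd q)"
  using dderiv_eqI[OF polyfun_fst, where p=p and q=q and r="[:fst p, fst q:]"]
    dderiv_eqI[OF polyfun_fst_snd, where p=p and q=q and r="[:fst (snd p), fst (snd q):]"]
    dderiv_eqI[OF polyfun_snd_snd, where p=p and q=q and r="[:snd (snd p), snd (snd q):]"]
  by (simp_all add: line3_def)

lemma dderiv_add:
  fixes f :: "'a::field_char_0 pt3 \<Rightarrow> 'a"
  assumes "polyfun f" "polyfun g"
  shows "dderiv (\<lambda>x. f x + g x) p q = dderiv f p q + dderiv g p q"
proof -
  obtain r1 r2 where r: "\<forall>t. f (line3 p q t) = poly r1 t" "\<forall>t. g (line3 p q t) = poly r2 t"
    using polyfun_along_line3[OF assms(1)] polyfun_along_line3[OF assms(2)] by blast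
  from dderiv_eqI[OF whpoly.add[OF assms], of p q "r1 + r2"]
    dderiv_eqI[OF assms(1) r(1)] dderiv_eqI[OF assms(2) r(2)] r
  show ?thesis by simp
qed

lemma dderiv_mult:
  fixes f :: "'a::field_char_0 pt3 \<Rightarrow> 'a"
  assumes "polyfun f" "polyfun g"
  shows "dderiv (\<lambda>x. f x * g x) p q = f p * dderiv g p q + g p * dderiv f p q"
proof -
  obtain r1 r2 where r: "\<forall>t. f (line3 p q t) = poly r1 t" "\<forall>t. g (line3 p q t) = poly r2 t"
    using polyfun_along_line3[OF assms(1)] polyfun_along_line3[OF assms(2)] by blast
  have "coeff (r1 * r2) 1 = coeff r1 0 * coeff r2 1 + coeff r1 1 * coeff r2 0"
    by (simp add: coeff_mult atMost_Suc algebra_simps)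
  with dderiv_eqI[OF polyfun_mult[OF assms], of p q "r1 * r2"]
    dderiv_eqI[OF assms(1) r(1)] dderiv_eqI[OF assms(2) r(2)] r
    coeff_0_of_line3[OF r(1)] coeff_0_of_line3[OF r(2)]
  show ?thesis by (simp add: algebra_simps)
qed

lemma dderiv_scale:
  fixes f :: "'a::field_char_0 pt3 \<Rightarrow> 'a"
  shows "polyfun f \<Longrightarrow> dderiv (\<lambda>x. c * f x) p q = c * dderiv f p q"
  using dderiv_mult[OF whpoly.const, of f c p q] by simp

lemma dderiv_uminus:
  fixes f :: "'a::field_char_0 pt3 \<Rightarrow> 'a"
  shows "polyfun f \<Longrightarrow> dderiv (\<lambda>x. - f x) p q = - dderiv f p q"
  using dderiv_scale[of f "-1" p q] by simp

lemma dderiv_diff: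
  fixes f :: "'a::field_char_0 pt3 \<Rightarrow> 'a"
  assumes "polyfun f" "polyfun g"
  shows "dderiv (\<lambda>x. f x - g x) p q = dderiv f p q - dderiv g p q"
  using dderiv_add[OF assms(1) whpoly_uminus[OF assms(2)], of p q] dderiv_uminus[OF assms(2)]
  by simp

lemma dderiv_power:
  fixes f :: "'a::field_char_0 pt3 \<Rightarrow> 'a"
  assumes "polyfun f"
  shows "dderiv (\<lambda>x. f x ^ n) p q = of_nat n * f p ^ (n - 1) * dderiv f p q"
proof (induction n)
  case (Suc n)
  have "dderiv (\<lambda>x. f x ^ Suc n) p q = f p * dderiv (\<lambda>x. f x ^ n) p q + f p ^ n * dderiv f p q"
    using dderiv_mult[OF assms polyfun_power[OF assms]] by simp
  also have "\<dots> = of_nat (Suc n) * f p ^ n * dderiv f p q"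
    using Suc.IH by (cases n) (simp_all add: algebra_simps)
  finally show ?case by simp
qed simp

lemma whpoly_dderiv:
  fixes f :: "'a::field_char_0 pt3 \<Rightarrow> 'a"
  assumes "whpoly w m f" "whpoly w (int (fst w) + r) u" "whpoly w (int (fst (snd w)) + r) v"
    "whpoly w (int (snd (snd w)) + r) z"
  shows "whpoly w (m + r) (\<lambda>p. dderiv f p (u p, v p, z p))"
  using assms(1)
proof (induction rule: whpoly.induct)
  case (add m f g)
  then show ?case
    using dderiv_add[OF add.hyps(1,2)[THEN whpoly_polyfun]] whpoly.add by simp
next
  case (mult m f n g)
  have "whpoly w (m + n + r) (\<lambda>p. f p * dderiv g p (u p, v p, z p))"
    by (rule whpoly_mult'[OF mult.hyps(1) mult.IH(2)]) simp
  moreover have "whpoly w (m + n + r) (\<lambda>p. g p * dderiv f p (u p, v p, z p))"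
    by (rule whpoly_mult'[OF mult.hyps(2) mult.IH(1)]) simp
  ultimately show ?case
    using dderiv_mult[OF mult.hyps(1,2)[THEN whpoly_polyfun]] whpoly.add by simp
qed (use assms(2-4) whpoly.zero in simp_all)

lemma polyfun_dderiv:
  fixes f :: "'a::field_char_0 pt3 \<Rightarrow> 'a"
  shows "polyfun f \<Longrightarrow> polyfun u \<Longrightarrow> polyfun v \<Longrightarrow> polyfun z
    \<Longrightarrow> polyfun (\<lambda>p. dderiv f p (u p, v p, z p))"
  using whpoly_dderiv[of "(0,0,0)" 0 f 0 u v z] by simp

lemma dderiv_comp:
  fixes f :: "'a::field_char_0 pt3 \<Rightarrow> 'a"
  assumes "polyfun f" "polyfun G1" "polyfun G2" "polyfun G3"
  shows "dderiv (\<lambda>x. f (G1 x, G2 x, G3 x)) p q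
       = dderiv f (G1 p, G2 p, G3 p) (dderiv G1 p q, dderiv G2 p q, dderiv G3 p q)"
  using assms(1)
proof (induction rule: whpoly.induct)
  case (add m f g)
  note comp = polyfun_comp[OF _ assms(2-4)]
  show ?case
    using dderiv_add[OF add.hyps(1,2)[THEN whpoly_polyfun]]
      dderiv_add[OF comp comp, OF add.hyps(1,2)[THEN whpoly_polyfun]] add.IH by simp
next
  case (mult m f n g)
  note comp = polyfun_comp[OF _ assms(2-4)]
  show ?case
    using dderiv_mult[OF mult.hyps(1,2)[THEN whpoly_polyfun]]
      dderiv_mult[OF comp comp, OF mult.hyps(1,2)[THEN whpoly_polyfun]] mult.IH by simp
qed simp_all

section \<open>Coefficient functions and coordinate rings\<close>

fun monom3 :: "nat \<times> nat \<times> nat \<Rightarrow> 'a::comm_ring_1 pt3 \<Rightarrow> 'a" where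
  "monom3 (i,j,k) p = fst p ^ i * fst (snd p) ^ j * snd (snd p) ^ k"

fun wdeg :: "nat \<times> nat \<times> nat \<Rightarrow> nat \<times> nat \<times> nat \<Rightarrow> nat" where
  "wdeg w (i,j,k) = fst w * i + fst (snd w) * j + snd (snd w) * k"

fun add3 :: "nat \<times> nat \<times> nat \<Rightarrow> nat \<times> nat \<times> nat \<Rightarrow> nat \<times> nat \<times> nat" where
  "add3 (i,j,k) (i',j',k') = (i+i', j+j', k+k')"

lemma monom3_add3: "monom3 (add3 x y) p = monom3 x p * monom3 y p"
  by (cases x; cases y) (simp add: power_add algebra_simps)

lemma wdeg_add3: "wdeg w (add3 x y) = wdeg w x + wdeg w y"
  by (cases x; cases y) (simp add: algebra_simps)

lemma peval3_eq_sum_monom3: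
  assumes "finite A" "{k. c k \<noteq> 0} \<subseteq> A"
  shows "peval3 c p = (\<Sum>x\<in>A. c x * monom3 x p)"
proof -
  have "peval3 c p = (\<Sum>x\<in>{k. c k \<noteq> 0}. c x * monom3 x p)"
    unfolding peval3_def by (rule sum.cong) (auto simp: mult.assoc)
  also have "\<dots> = (\<Sum>x\<in>A. c x * monom3 x p)"
    by (rule sum.mono_neutral_left) (use assms in auto)
  finally show ?thesis .
qed

definition peval3_hom :: "nat \<times> nat \<times> nat \<Rightarrow> int \<Rightarrow> ('a::comm_ring_1 pt3 \<Rightarrow> 'a) \<Rightarrow> bool" where
  "peval3_hom w m f \<longleftrightarrow> (\<exists>c. fin_supp c \<and> (\<forall>x. c x \<noteq> 0 \<longrightarrow> int (wdeg w x) = m) \<and> f = peval3 c)"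

lemma peval3_hom_zero: "peval3_hom w m (\<lambda>_. 0)"
  unfolding peval3_hom_def
  by (rule exI[of _ "\<lambda>_. 0"]) (auto simp: fin_supp_def peval3_def)

lemma peval3_hom_monom3: "int (wdeg w x) = m \<or> a = 0 \<Longrightarrow> peval3_hom w m (\<lambda>p. a * monom3 x p)"
proof (cases "a = 0")
  case False
  assume deg: "int (wdeg w x) = m \<or> a = 0"
  show ?thesis unfolding peval3_hom_def
  proof (intro exI[of _ "\<lambda>y. if y = x then a else 0"] conjI)
    show "fin_supp (\<lambda>y. if y = x then a else 0)"
      unfolding fin_supp_def by (rule finite_subset[of _ "{x}"]) auto
    show "(\<lambda>p. a * monom3 x p) = peval3 (\<lambda>y. if y = x then a else 0)"
      by (rule ext, subst peval3_eq_sum_monom3[of "{x}"]) auto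
  qed (use deg False in auto)
qed (simp add: peval3_hom_zero)

lemma peval3_hom_add:
  assumes "peval3_hom w m f" "peval3_hom w m g"
  shows "peval3_hom w m (\<lambda>p. f p + g p)"
proof -
  obtain c1 c2 where c: "fin_supp c1" "\<forall>x. c1 x \<noteq> 0 \<longrightarrow> int (wdeg w x) = m" "f = peval3 c1"
    "fin_supp c2" "\<forall>x. c2 x \<noteq> 0 \<longrightarrow> int (wdeg w x) = m" "g = peval3 c2"
    using assms unfolding peval3_hom_def by blast
  let ?A = "{k. c1 k \<noteq> 0} \<union> {k. c2 k \<noteq> 0}"
  have fA: "finite ?A" using c unfolding fin_supp_def by auto
  show ?thesis unfolding peval3_hom_def
  proof (intro exI[of _ "\<lambda>x. c1 x + c2 x"] conjI allI impI ext)
    show "fin_supp (\<lambda>x. c1 x + c2 x)"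
      unfolding fin_supp_def by (rule finite_subset[OF _ fA]) auto
    show "int (wdeg w x) = m" if "c1 x + c2 x \<noteq> 0" for x
      using that c by (metis add.left_neutral add_0_right)
    show "f p + g p = peval3 (\<lambda>x. c1 x + c2 x) p" for p
    proof -
      have "peval3 (\<lambda>x. c1 x + c2 x) p = (\<Sum>x\<in>?A. (c1 x + c2 x) * monom3 x p)"
        by (rule peval3_eq_sum_monom3[OF fA]) auto
      then show ?thesis
        using peval3_eq_sum_monom3[OF fA, of c1 p] peval3_eq_sum_monom3[OF fA, of c2 p]
        by (simp add: c(3,6) sum.distrib algebra_simps)
    qed
  qed
qed

lemma peval3_hom_sum:
  "finite A \<Longrightarrow> (\<And>i. i \<in> A \<Longrightarrow> peval3_hom w m (g i)) \<Longrightarrow> peval3_hom w m (\<lambda>p. \<Sum>i\<in>A. g i p)"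
  by (induction A rule: finite_induct) (simp_all add: peval3_hom_zero peval3_hom_add)

lemma peval3_hom_mult:
  assumes "peval3_hom w m f" "peval3_hom w n g"
  shows "peval3_hom w (m + n) (\<lambda>p. f p * g p)"
proof -
  obtain c1 c2 where c: "fin_supp c1" "\<forall>x. c1 x \<noteq> 0 \<longrightarrow> int (wdeg w x) = m" "f = peval3 c1"
    "fin_supp c2" "\<forall>x. c2 x \<noteq> 0 \<longrightarrow> int (wdeg w x) = n" "g = peval3 c2"
    using assms unfolding peval3_hom_def by blast
  let ?A = "{k. c1 k \<noteq> 0}" and ?B = "{k. c2 k \<noteq> 0}"
  have fin: "finite ?A" "finite ?B" using c unfolding fin_supp_def by auto
  have "f p * g p = (\<Sum>x\<in>?A. \<Sum>y\<in>?B. (c1 x * c2 y) * monom3 (add3 x y) p)" for p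
  proof -
    have "f p * g p = (\<Sum>x\<in>?A. c1 x * monom3 x p) * (\<Sum>y\<in>?B. c2 y * monom3 y p)"
      using peval3_eq_sum_monom3[OF fin(1), of c1] peval3_eq_sum_monom3[OF fin(2), of c2] c
      by simp
    then show ?thesis by (simp add: sum_product monom3_add3 mult_ac)
  qed
  moreover have "peval3_hom w (m + n) (\<lambda>p. \<Sum>x\<in>?A. \<Sum>y\<in>?B. (c1 x * c2 y) * monom3 (add3 x y) p)"
    using c(2,5) fin
    by (intro peval3_hom_sum peval3_hom_monom3) (auto simp: wdeg_add3)
  ultimately show ?thesis by simp
qed

lemma whpoly_monom3: "whpoly w (int (wdeg w x)) (\<lambda>p. a * monom3 x p)"
proof (cases x)
  case (fields i j k)
  have "whpoly w (0 + int i * int (fst w) + int j * int (fst (snd w)) + int k * int (snd (snd w)))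
     (\<lambda>p. a * fst p ^ i * fst (snd p) ^ j * snd (snd p) ^ k)"
    by (intro whpoly.mult whpoly.const whpoly_power[OF whpoly.fst] whpoly_power[OF whpoly.fst_snd]
        whpoly_power[OF whpoly.snd_snd] refl)
  then show ?thesis using fields by (simp add: algebra_simps)
qed

lemma peval3_hom_iff_whpoly: "peval3_hom w m f \<longleftrightarrow> whpoly w m f"
proof
  assume "peval3_hom w m f"
  then obtain c where c: "fin_supp c" "\<forall>x. c x \<noteq> 0 \<longrightarrow> int (wdeg w x) = m" "f = peval3 c"
    unfolding peval3_hom_def by blast
  have fin: "finite {k. c k \<noteq> 0}" using c(1) by (simp add: fin_supp_def)
  have "whpoly w m (\<lambda>p. \<Sum>x\<in>{k. c k \<noteq> 0}. c x * monom3 x p)"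
  proof (rule whpoly_sum[OF fin])
    fix x assume "x \<in> {k. c k \<noteq> 0}"
    then have "int (wdeg w x) = m" using c(2) by blast
    then show "whpoly w m (\<lambda>p. c x * monom3 x p)" using whpoly_monom3[of w x "c x"] by simp
  qed
  moreover have "f = (\<lambda>p. \<Sum>x\<in>{k. c k \<noteq> 0}. c x * monom3 x p)"
    using c(3) peval3_eq_sum_monom3[OF fin, of c] by auto
  ultimately show "whpoly w m f" by simp
next
  assume "whpoly w m f"
  then show "peval3_hom w m f"
  proof induction
    case (const k)
    then show ?case using peval3_hom_monom3[of w "(0,0,0)" 0 k] by simp
  next
    case fst
    then show ?case using peval3_hom_monom3[of w "(1,0,0)" _ 1] by simp
  next
    case fst_snd
    then show ?case using peval3_hom_monom3[of w "(0,1,0)" _ 1] by simp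
  next
    case snd_snd
    then show ?case using peval3_hom_monom3[of w "(0,0,1)" _ 1] by simp
  qed (simp_all add: peval3_hom_zero peval3_hom_add peval3_hom_mult)
qed

lemma whom_iff_whpoly: "whom S w m f \<longleftrightarrow> (\<exists>g. whpoly w m g \<and> f = restr S g)"
proof -
  have deg: "(\<forall>i j k. c (i,j,k) \<noteq> 0 \<longrightarrow> int (fst w * i + fst (snd w) * j + snd (snd w) * k) = m)
        \<longleftrightarrow> (\<forall>x. c x \<noteq> 0 \<longrightarrow> int (wdeg w x) = m)" for c :: "nat \<times> nat \<times> nat \<Rightarrow> 'a"
    by (metis wdeg.simps prod_cases3)
  show ?thesis
    unfolding whom_def deg peval3_hom_iff_whpoly[symmetric] peval3_hom_def by blast
qed

lemma coord_ring_iff_polyfun: "f \<in> coord_ring S \<longleftrightarrow> (\<exists>g. polyfun g \<and> f = restr S g)"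
  using whom_iff_whpoly[of S "(0,0,0)" 0 f] by (auto simp: whom_def coord_ring_def)

lemma restr_in_coord_ring: "polyfun g \<Longrightarrow> restr S g \<in> coord_ring S"
  using coord_ring_iff_polyfun by blast

lemma coord_ring_vanishes_outside: "f \<in> coord_ring S \<Longrightarrow> p \<notin> S \<Longrightarrow> f p = 0"
  unfolding coord_ring_def restr_def by auto

lemma restr_coord_ring: "f \<in> coord_ring S \<Longrightarrow> restr S f = f"
  unfolding coord_ring_def restr_def by auto

lemma restr_add: "restr S (\<lambda>p. f p + g p) = (\<lambda>p. restr S f p + restr S g p)"
  and restr_mult: "restr S (\<lambda>p. f p * g p) = (\<lambda>p. restr S f p * restr S g p)"
  and restr_scale: "restr S (\<lambda>p. c * f p) = (\<lambda>p. c * restr S f p)"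
  for f g :: "'a::comm_ring_1 pt3 \<Rightarrow> 'a"
  by (auto simp: restr_def)

lemma restr_eqI: "(\<And>p. p \<in> S \<Longrightarrow> f p = g p) \<Longrightarrow> restr S f = restr S g"
  unfolding restr_def by auto

lemma restr_eqD: "restr S f = restr S g \<Longrightarrow> p \<in> S \<Longrightarrow> f p = g p"
  unfolding restr_def by metis

section \<open>Derivations of coordinate rings\<close>

lemma derivation_in_coord_ring: "is_derivation S D \<Longrightarrow> f \<in> coord_ring S \<Longrightarrow> D f \<in> coord_ring S"
  unfolding is_derivation_def by blast

lemma derivation_restr_one:
  fixes D :: "('a::field_char_0 pt3 \<Rightarrow> 'a) \<Rightarrow> ('a pt3 \<Rightarrow> 'a)"
  assumes D: "is_derivation S D"
  shows "D (restr S (\<lambda>_. 1)) = (\<lambda>_. 0)"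
proof
  fix p
  let ?one = "restr S (\<lambda>_. 1::'a)"
  have one: "?one \<in> coord_ring S" by (rule restr_in_coord_ring) (rule whpoly.const)
  have "(\<lambda>p. ?one p * ?one p) = ?one" by (auto simp: restr_def)
  then have "D ?one p = ?one p * D ?one p + ?one p * D ?one p"
    using D one unfolding is_derivation_def by metis
  moreover have "D ?one \<in> coord_ring S" using derivation_in_coord_ring[OF D one] .
  ultimately show "D ?one p = 0"
    using coord_ring_vanishes_outside by (cases "p \<in> S") (auto simp: restr_def)
qed

lemma derivation_restr_const:
  fixes D :: "('a::field_char_0 pt3 \<Rightarrow> 'a) \<Rightarrow> ('a pt3 \<Rightarrow> 'a)"
  assumes D: "is_derivation S D"
  shows "D (restr S (\<lambda>_. k)) = (\<lambda>_. 0)"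
proof -
  have one: "restr S (\<lambda>_. 1::'a) \<in> coord_ring S" by (rule restr_in_coord_ring) (rule whpoly.const)
  have "restr S (\<lambda>_. k) = (\<lambda>p. k * restr S (\<lambda>_. 1) p)" by (auto simp: restr_def)
  then show ?thesis
    using D one derivation_restr_one[OF D] unfolding is_derivation_def by (metis mult_zero_right)
qed

lemma derivation_restr:
  fixes D :: "('a::field_char_0 pt3 \<Rightarrow> 'a) \<Rightarrow> ('a pt3 \<Rightarrow> 'a)"
  assumes D: "is_derivation S D" and f: "polyfun f"
  shows "D (restr S f) = restr S (\<lambda>p. dderiv f p (D (restr S (\<lambda>p. fst p)) p,
            D (restr S (\<lambda>p. fst (snd p))) p, D (restr S (\<lambda>p. snd (snd p))) p))"
  using f
proof (induction rule: whpoly.induct)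
  case (zero m)
  then show ?case using derivation_restr_const[OF D, of 0] by (simp add: restr_def)
next
  case (const k)
  then show ?case using derivation_restr_const[OF D, of k] by (simp add: restr_def)
next
  case fst
  then show ?case
    using restr_coord_ring[OF derivation_in_coord_ring[OF D restr_in_coord_ring[OF polyfun_fst]]]
    by simp
next
  case fst_snd
  then show ?case
    using restr_coord_ring[OF derivation_in_coord_ring[OF D restr_in_coord_ring[OF polyfun_fst_snd]]]
    by simp
next
  case snd_snd
  then show ?case
    using restr_coord_ring[OF derivation_in_coord_ring[OF D restr_in_coord_ring[OF polyfun_snd_snd]]]
    by simp
next
  case (add m f g)
  note fg = add.hyps[THEN whpoly_polyfun, THEN restr_in_coord_ring, of S]
  have "D (restr S (\<lambda>p. f p + g p)) = (\<lambda>p. D (restr S f) p + D (restr S g) p)"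
    using D fg unfolding is_derivation_def restr_add by blast
  then show ?case
    using add.IH dderiv_add[OF add.hyps[THEN whpoly_polyfun]] by (auto simp: restr_def)
next
  case (mult m f n g)
  note fg = mult.hyps[THEN whpoly_polyfun, THEN restr_in_coord_ring, of S]
  have "D (restr S (\<lambda>p. f p * g p))
      = (\<lambda>p. restr S f p * D (restr S g) p + restr S g p * D (restr S f) p)"
    using D fg unfolding is_derivation_def restr_mult by blast
  then show ?case
    using mult.IH dderiv_mult[OF mult.hyps[THEN whpoly_polyfun]] by (auto simp: restr_def)
qed

lemma derivation_restr_coords:
  fixes D :: "('a::field_char_0 pt3 \<Rightarrow> 'a) \<Rightarrow> ('a pt3 \<Rightarrow> 'a)"
  assumes D: "is_derivation S D" and f: "polyfun f"
    and coords: "D (restr S (\<lambda>p. fst p)) = restr S A" "D (restr S (\<lambda>p. fst (snd p))) = restr S B"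
      "D (restr S (\<lambda>p. snd (snd p))) = restr S C"
  shows "D (restr S f) = restr S (\<lambda>p. dderiv f p (A p, B p, C p))"
  unfolding derivation_restr[OF D f] coords by (rule restr_eqI) (simp add: restr_def)

section \<open>Polynomial functions on S'\<close>

lemma mem_surfS': "(a,b,c) \<in> surfS' e1 \<longleftrightarrow> a^(2*e1) = 4*b*c"
  by (simp add: surfS'_def)

lemma mem_surfS: "(a,b,c) \<in> surfS e1 \<longleftrightarrow> c^2 + (a^e1 - b^2) * a = 0"
  by (simp add: surfS_def)

lemma surfS'_curve_off_fst_zero:
  fixes b c :: "'a::field_char_0"
  assumes e: "e1 \<ge> 1" and p: "(0,b,c) \<in> surfS' e1"
  obtains x y z where "(poly x 0, poly y 0, poly z 0) = (0,b,c)"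
    and "\<And>t. t \<noteq> 0 \<Longrightarrow> (poly x t, poly y t, poly z t) \<in> surfS' e1 \<and> poly x t \<noteq> 0"
proof -
  have z: "(0::'a)^e1 = 0" "(0::'a)^(2*e1) = 0" using e by simp_all
  have "4*b*c = 0" using p z(2) by (simp only: mem_surfS')
  then have bc: "b = 0 \<or> c = 0" by simp
  consider "b \<noteq> 0" | "c \<noteq> 0" | "b = 0" "c = 0" by blast
  then show thesis
  proof cases
    case 1
    then show thesis
      using bc z by (intro that[of "[:0,1:]" "[:b:]" "monom (1/(4*b)) (2*e1)"])
        (auto simp: poly_monom mem_surfS')
  next
    case 2
    then show thesis
      using bc z by (intro that[of "[:0,1:]" "monom (1/(4*c)) (2*e1)" "[:c:]"])
        (auto simp: poly_monom mem_surfS')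
  next
    case 3
    have "(t^e1 / 2)^2 * 4 = (t^2)^e1" for t :: 'a
      by (simp add: power_divide power_mult[symmetric] mult.commute)
    then show thesis
      using 3 z by (intro that[of "[:0,1:]" "monom (1/2) e1" "monom (1/2) e1"])
        (auto simp: poly_monom mem_surfS' power_mult power2_eq_square mult_ac)
  qed
qed

lemma surfS'_curve_off_fst_snd_zero:
  fixes a c :: "'a::field_char_0"
  assumes e: "e1 \<ge> 1" and p: "(a,0,c) \<in> surfS' e1"
  obtains x y z where "(poly x 0, poly y 0, poly z 0) = (a,0,c)"
    and "\<And>t. t \<noteq> 0 \<Longrightarrow> (poly x t, poly y t, poly z t) \<in> surfS' e1 \<and> poly y t \<noteq> 0"
proof -
  have z: "(0::'a)^(2*e1) = 0" using e by simp
  have a: "a = 0" using p by (simp add: mem_surfS')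
  show thesis
  proof (cases "c = 0")
    case True
    then show thesis
      using a z by (intro that[of 0 "[:0,1:]" 0]) (auto simp: mem_surfS')
  next
    case False
    then show thesis
      using a z by (intro that[of "[:0,1:]" "monom (1/(4*c)) (2*e1)" "[:c:]"])
        (auto simp: poly_monom mem_surfS')
  qed
qed

lemma polyfun_vanishes_on_surfS'_of_fst:
  fixes g :: "'a::field_char_0 pt3 \<Rightarrow> 'a"
  assumes e: "e1 \<ge> 1" and g: "polyfun g"
    and vanish: "\<And>p. p \<in> surfS' e1 \<Longrightarrow> fst p \<noteq> 0 \<Longrightarrow> g p = 0"
    and p: "p \<in> surfS' e1"
  shows "g p = 0"
proof (cases "fst p = 0")
  case True
  then obtain b c where bc: "p = (0,b,c)" by (metis prod.collapse)
  obtain x y z where "(poly x 0, poly y 0, poly z 0) = p"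
    and "\<And>t. t \<noteq> 0 \<Longrightarrow> (poly x t, poly y t, poly z t) \<in> surfS' e1 \<and> poly x t \<noteq> 0"
    using surfS'_curve_off_fst_zero[OF e p[unfolded bc]] bc by metis
  then show ?thesis using polyfun_vanishes_at_curve_0[OF g] vanish by fastforce
qed (use vanish p in auto)

lemma polyfun_vanishes_on_surfS'_of_fst_snd:
  fixes g :: "'a::field_char_0 pt3 \<Rightarrow> 'a"
  assumes e: "e1 \<ge> 1" and g: "polyfun g"
    and vanish: "\<And>p. p \<in> surfS' e1 \<Longrightarrow> fst (snd p) \<noteq> 0 \<Longrightarrow> g p = 0"
    and p: "p \<in> surfS' e1"
  shows "g p = 0"
proof (cases "fst (snd p) = 0")
  case True
  then obtain a c where ac: "p = (a,0,c)" by (metis prod.collapse)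
  obtain x y z where "(poly x 0, poly y 0, poly z 0) = p"
    and "\<And>t. t \<noteq> 0 \<Longrightarrow> (poly x t, poly y t, poly z t) \<in> surfS' e1 \<and> poly y t \<noteq> 0"
    using surfS'_curve_off_fst_snd_zero[OF e p[unfolded ac]] ac by metis
  then show ?thesis using polyfun_vanishes_at_curve_0[OF g] vanish by fastforce
qed (use vanish p in auto)

definition surfS'_poly :: "nat \<Rightarrow> 'a::comm_ring_1 pt3 \<Rightarrow> 'a" where
  "surfS'_poly e1 p = fst p ^ (2*e1) - 4 * fst (snd p) * snd (snd p)"

lemma polyfun_surfS'_poly: "polyfun (surfS'_poly e1)"
proof -
  have "polyfun (\<lambda>p. fst p ^ (2*e1) - 4 * fst (snd p) * snd (snd p))" by (intro polyfun_intros)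
  then show ?thesis by (simp add: surfS'_poly_def[abs_def])
qed

lemma surfS'_poly_eq_0: "p \<in> surfS' e1 \<Longrightarrow> surfS'_poly e1 p = 0"
  by (cases p) (simp add: surfS'_poly_def mem_surfS')

lemma dderiv_surfS'_poly:
  fixes p q :: "'a::field_char_0 pt3"
  shows "dderiv (surfS'_poly e1) p q = of_nat (2*e1) * fst p ^ (2*e1 - 1) * fst q
     - 4 * snd (snd p) * fst (snd q) - 4 * fst (snd p) * snd (snd q)"
proof -
  have eq: "surfS'_poly e1 = (\<lambda>x::'a pt3. fst x ^ (2*e1) - (4 * fst (snd x)) * snd (snd x))"
    by (simp add: surfS'_poly_def[abs_def])
  have "polyfun (\<lambda>x. fst x ^ (2*e1) :: 'a)" "polyfun (\<lambda>x. (4 * fst (snd x)) * snd (snd x) :: 'a)"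
    "polyfun (\<lambda>x. 4 * fst (snd x) :: 'a)"
    by (intro polyfun_intros)+
  then have "dderiv (surfS'_poly e1) p q = of_nat (2*e1) * fst p ^ (2*e1 - 1) * fst q
      - (4 * fst (snd p) * snd (snd q) + snd (snd p) * (4 * fst (snd q)))"
    unfolding eq
    by (simp only: dderiv_diff dderiv_power polyfun_fst dderiv_fst dderiv_mult polyfun_snd_snd
        dderiv_snd_snd dderiv_scale polyfun_fst_snd dderiv_fst_snd)
  then show ?thesis by (simp add: algebra_simps)
qed

text \<open>Pseudo-division by the equation of S', viewed as a polynomial of degree one in the
  third variable with leading coefficient -4 times the second one.\<close>

definition pseudo_divisible_surfS' :: "nat \<Rightarrow> ('a::comm_ring_1 pt3 \<Rightarrow> 'a) \<Rightarrow> bool" where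
  "pseudo_divisible_surfS' e1 f \<longleftrightarrow> (\<exists>n Q R. polyfun Q \<and> polyfun R
      \<and> (\<forall>p. R p = R (fst p, fst (snd p), 0))
      \<and> (\<forall>p. (-4 * fst (snd p))^n * f p = surfS'_poly e1 p * Q p + R p))"

lemma pseudo_divisible_surfS'_add:
  assumes "pseudo_divisible_surfS' e1 f" "pseudo_divisible_surfS' e1 g"
  shows "pseudo_divisible_surfS' e1 (\<lambda>p. f p + g p)"
proof -
  obtain n1 Q1 R1 n2 Q2 R2 where A: "polyfun Q1" "polyfun R1" "\<forall>p. R1 p = R1 (fst p, fst (snd p), 0)"
      "\<forall>p. (-4 * fst (snd p))^n1 * f p = surfS'_poly e1 p * Q1 p + R1 p"
      "polyfun Q2" "polyfun R2" "\<forall>p. R2 p = R2 (fst p, fst (snd p), 0)"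
      "\<forall>p. (-4 * fst (snd p))^n2 * g p = surfS'_poly e1 p * Q2 p + R2 p"
    using assms unfolding pseudo_divisible_surfS'_def by blast
  let ?b = "\<lambda>p. -4 * fst (snd p)"
  show ?thesis unfolding pseudo_divisible_surfS'_def
  proof (intro exI conjI allI)
    show "polyfun (\<lambda>p. Q1 p * ?b p ^ n2 + Q2 p * ?b p ^ n1)"
      using A by (intro polyfun_intros)
    show "polyfun (\<lambda>p. R1 p * ?b p ^ n2 + R2 p * ?b p ^ n1)"
      using A by (intro polyfun_intros)
    show "R1 p * ?b p ^ n2 + R2 p * ?b p ^ n1
        = R1 (fst p, fst (snd p), 0) * ?b (fst p, fst (snd p), 0) ^ n2
          + R2 (fst p, fst (snd p), 0) * ?b (fst p, fst (snd p), 0) ^ n1" for p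
      unfolding fst_conv snd_conv using A(3,7) by metis
    show "?b p ^ (n1 + n2) * (f p + g p)
        = surfS'_poly e1 p * (Q1 p * ?b p ^ n2 + Q2 p * ?b p ^ n1) + (R1 p * ?b p ^ n2 + R2 p * ?b p ^ n1)"
      for p
    proof -
      have f: "?b p ^ n1 * f p = surfS'_poly e1 p * Q1 p + R1 p"
        and g: "?b p ^ n2 * g p = surfS'_poly e1 p * Q2 p + R2 p" using A(4,8) by blast+
      have "?b p ^ (n1 + n2) * (f p + g p) = ?b p ^ n2 * (?b p ^ n1 * f p) + ?b p ^ n1 * (?b p ^ n2 * g p)"
        by (simp add: power_add algebra_simps)
      then show ?thesis unfolding f g by (simp add: algebra_simps)
    qed
  qed
qed

lemma pseudo_divisible_surfS'_mult:
  assumes "pseudo_divisible_surfS' e1 f" "pseudo_divisible_surfS' e1 g"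
  shows "pseudo_divisible_surfS' e1 (\<lambda>p. f p * g p)"
proof -
  obtain n1 Q1 R1 n2 Q2 R2 where A: "polyfun Q1" "polyfun R1" "\<forall>p. R1 p = R1 (fst p, fst (snd p), 0)"
      "\<forall>p. (-4 * fst (snd p))^n1 * f p = surfS'_poly e1 p * Q1 p + R1 p"
      "polyfun Q2" "polyfun R2" "\<forall>p. R2 p = R2 (fst p, fst (snd p), 0)"
      "\<forall>p. (-4 * fst (snd p))^n2 * g p = surfS'_poly e1 p * Q2 p + R2 p"
    using assms unfolding pseudo_divisible_surfS'_def by blast
  show ?thesis unfolding pseudo_divisible_surfS'_def
  proof (intro exI conjI allI)
    show "polyfun (\<lambda>p. Q1 p * (surfS'_poly e1 p * Q2 p + R2 p) + R1 p * Q2 p)"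
      using A polyfun_surfS'_poly by (intro polyfun_intros)
    show "polyfun (\<lambda>p. R1 p * R2 p)"
      using A by (intro polyfun_intros)
    show "R1 p * R2 p = R1 (fst p, fst (snd p), 0) * R2 (fst p, fst (snd p), 0)" for p
      using A(3,7) by metis
    show "(-4 * fst (snd p))^(n1 + n2) * (f p * g p)
        = surfS'_poly e1 p * (Q1 p * (surfS'_poly e1 p * Q2 p + R2 p) + R1 p * Q2 p) + R1 p * R2 p"
      for p
    proof -
      have f: "(-4 * fst (snd p))^n1 * f p = surfS'_poly e1 p * Q1 p + R1 p"
        and g: "(-4 * fst (snd p))^n2 * g p = surfS'_poly e1 p * Q2 p + R2 p" using A(4,8) by blast+
      have "(-4 * fst (snd p))^(n1 + n2) * (f p * g p)
          = ((-4 * fst (snd p))^n1 * f p) * ((-4 * fst (snd p))^n2 * g p)"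
        by (simp add: power_add algebra_simps)
      then show ?thesis unfolding f g by (simp add: algebra_simps)
    qed
  qed
qed

lemma polyfun_pseudo_divisible_surfS':
  fixes f :: "'a::comm_ring_1 pt3 \<Rightarrow> 'a"
  assumes "whpoly w m f"
  shows "pseudo_divisible_surfS' e1 f"
  using assms
proof (induction rule: whpoly.induct)
  case (zero m)
  show ?case unfolding pseudo_divisible_surfS'_def
    by (intro exI[of _ 0] exI[of _ "\<lambda>_. 0"]) (auto intro: polyfun_intros)
next
  case (const k)
  show ?case unfolding pseudo_divisible_surfS'_def
    by (intro exI[of _ 0] exI[of _ "\<lambda>_. 0"] exI[of _ "\<lambda>_. k"]) (auto intro: polyfun_intros)
next
  case fst
  show ?case unfolding pseudo_divisible_surfS'_def
    by (intro exI[of _ 0] exI[of _ "\<lambda>_. 0"] exI[of _ "\<lambda>p. fst p"]) (auto intro: polyfun_intros)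
next
  case fst_snd
  show ?case unfolding pseudo_divisible_surfS'_def
    by (intro exI[of _ 0] exI[of _ "\<lambda>_. 0"] exI[of _ "\<lambda>p. fst (snd p)"])
      (auto intro: polyfun_intros)
next
  case snd_snd
  show ?case unfolding pseudo_divisible_surfS'_def
    by (intro exI[of _ 1] exI[of _ "\<lambda>_. 1"] exI[of _ "\<lambda>p. - (fst p ^ (2*e1))"])
       (auto intro!: polyfun_intros simp: surfS'_poly_def)
next
  case (add m f g)
  then show ?case using pseudo_divisible_surfS'_add by blast
next
  case (mult m f n g)
  then show ?case using pseudo_divisible_surfS'_mult by blast
qed

lemma surfS'_poly_pseudo_divides:
  fixes f :: "'a::field_char_0 pt3 \<Rightarrow> 'a"
  assumes f: "polyfun f" and f0: "\<And>p. p \<in> surfS' e1 \<Longrightarrow> f p = 0"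
  obtains n Q where "polyfun Q" "\<And>p. (-4 * fst (snd p))^n * f p = surfS'_poly e1 p * Q p"
proof -
  obtain n Q R where Q: "polyfun Q" and R: "polyfun R" "\<forall>p. R p = R (fst p, fst (snd p), 0)"
      and div: "\<forall>p. (-4 * fst (snd p))^n * f p = surfS'_poly e1 p * Q p + R p"
    using polyfun_pseudo_divisible_surfS'[OF f, of e1] unfolding pseudo_divisible_surfS'_def by blast
  have R_off: "R (a, b, 0) = 0" if "b \<noteq> 0" for a b
  proof -
    let ?p = "(a, b, a^(2*e1) / (4*b))"
    have p: "?p \<in> surfS' e1" using that by (simp add: mem_surfS')
    then have "R ?p = 0" using div f0 surfS'_poly_eq_0[OF p] by (metis add_0 mult_zero_left mult_zero_right)
    then show ?thesis using R(2) by (metis fst_conv snd_conv)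
  qed
  have R0: "R (a, b, 0) = 0" for a b
    using polyfun_vanishes_at_curve_0[OF R(1), of "[:a:]" "[:0,1:]" 0] R_off by (cases "b = 0") auto
  show thesis
  proof (rule that[OF Q])
    show "(-4 * fst (snd p))^n * f p = surfS'_poly e1 p * Q p" for p
      using div R(2) R0 by (metis add_0_right)
  qed
qed

lemma dderiv_vanishes_on_surfS':
  fixes f :: "'a::field_char_0 pt3 \<Rightarrow> 'a"
  assumes e: "e1 \<ge> 1" and f: "polyfun f" and f0: "\<And>p. p \<in> surfS' e1 \<Longrightarrow> f p = 0"
    and V: "polyfun u" "polyfun v" "polyfun w"
    and tangent: "\<And>p. p \<in> surfS' e1 \<Longrightarrow> dderiv (surfS'_poly e1) p (u p, v p, w p) = 0"
    and p: "p \<in> surfS' e1"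
  shows "dderiv f p (u p, v p, w p) = 0"
proof (rule polyfun_vanishes_on_surfS'_of_fst_snd[OF e polyfun_dderiv[OF f V] _ p])
  fix p :: "'a pt3" assume p: "p \<in> surfS' e1" and b: "fst (snd p) \<noteq> 0"
  obtain n Q where Q: "polyfun Q" "\<And>p. (-4 * fst (snd p))^n * f p = surfS'_poly e1 p * Q p"
    using surfS'_poly_pseudo_divides[OF f f0] by metis
  have bn: "polyfun (\<lambda>x. (-4 * fst (snd x))^n :: 'a)" by (intro polyfun_intros)
  have "(-4 * fst (snd p))^n * dderiv f p (u p, v p, w p)
      = dderiv (\<lambda>x. (-4 * fst (snd x))^n * f x) p (u p, v p, w p)"
    using dderiv_mult[OF bn f] f0[OF p] by simp
  also have "\<dots> = dderiv (\<lambda>x. surfS'_poly e1 x * Q x) p (u p, v p, w p)"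
    using Q(2) by presburger
  also have "\<dots> = 0"
    using dderiv_mult[OF polyfun_surfS'_poly Q(1)] surfS'_poly_eq_0[OF p] tangent[OF p] by simp
  finally show "dderiv f p (u p, v p, w p) = 0" using b by simp
qed

lemma dderiv_cong_surfS':
  fixes f g :: "'a::field_char_0 pt3 \<Rightarrow> 'a"
  assumes e: "e1 \<ge> 1" and fg: "polyfun f" "polyfun g" "\<And>p. p \<in> surfS' e1 \<Longrightarrow> f p = g p"
    and V: "polyfun u" "polyfun v" "polyfun w"
    and tangent: "\<And>p. p \<in> surfS' e1 \<Longrightarrow> dderiv (surfS'_poly e1) p (u p, v p, w p) = 0"
    and p: "p \<in> surfS' e1"
  shows "dderiv f p (u p, v p, w p) = dderiv g p (u p, v p, w p)"
  using dderiv_vanishes_on_surfS'[OF e whpoly_diff[OF fg(1,2)] _ V tangent p] fg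
  by (simp add: dderiv_diff)

lemma mapF_eq: "mapF p = (fst p ^ 2, fst (snd p) + snd (snd p), fst p * (fst (snd p) - snd (snd p)))"
  by (cases p) (simp add: mapF_def)

lemma sigma_eq: "sigma p = (- fst p, snd (snd p), fst (snd p))"
  by (cases p) (simp add: sigma_def)

lemma sigma_sigma [simp]: "sigma (sigma p) = p"
  by (simp add: sigma_eq)

lemma sigma_in_surfS': "p \<in> surfS' e1 \<Longrightarrow> sigma p \<in> surfS' e1"
  by (cases p) (simp add: sigma_eq mem_surfS' mult_ac)

lemma mapF_sigma [simp]: "mapF (sigma p) = mapF p"
  by (simp add: mapF_eq sigma_eq algebra_simps)

lemma mapF_in_surfS:
  assumes "p \<in> surfS' e1"
  shows "mapF p \<in> surfS e1"
proof -
  obtain a b c where p: "p = (a,b,c)" by (cases p)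
  have "(a*(b-c))^2 + ((a^2)^e1 - (b+c)^2) * a^2 = a^2 * (a^(2*e1) - 4*b*c)"
    by (simp add: power2_eq_square power_mult algebra_simps)
  also have "\<dots> = 0" using assms p by (simp add: mem_surfS')
  finally show ?thesis using p by (simp add: mapF_eq mem_surfS)
qed

lemma whpoly_comp_mapF:
  assumes "whpoly (2*wa, e1*wa, e1*wa+wa) m f"
  shows "whpoly (wa, e1*wa, e1*wa) m (\<lambda>p. f (mapF p))"
proof -
  let ?w = "(wa, e1*wa, e1*wa)"
  have "whpoly ?w (int (2*wa)) (\<lambda>p. fst p ^ 2)" by (rule whpoly_power[OF whpoly.fst]) simp
  moreover have "whpoly ?w (int (e1*wa)) (\<lambda>p. fst (snd p) + snd (snd p))"
    by (intro whpoly.add whpoly_fst_snd' whpoly_snd_snd') simp_all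
  moreover have "whpoly ?w (int (e1*wa+wa)) (\<lambda>p. fst p * (fst (snd p) - snd (snd p)))"
    by (intro whpoly_mult'[OF whpoly.fst whpoly_diff] whpoly_fst_snd' whpoly_snd_snd') simp_all
  ultimately show ?thesis using whpoly_comp[OF assms] by (simp add: mapF_eq)
qed

lemma polyfun_comp_mapF: "polyfun f \<Longrightarrow> polyfun (\<lambda>p. f (mapF p))"
  using whpoly_comp_mapF[of 0 e1 0 f] by simp

lemma whpoly_comp_sigma:
  assumes "whpoly (wa, wb, wb) m f"
  shows "whpoly (wa, wb, wb) m (\<lambda>p. f (sigma p))"
proof -
  have "whpoly (wa, wb, wb) (int wb) (\<lambda>p. snd (snd p))" "whpoly (wa, wb, wb) (int wb) (\<lambda>p. fst (snd p))"
    by (auto intro: whpoly_snd_snd' whpoly_fst_snd')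
  then show ?thesis
    using whpoly_comp[OF assms whpoly_uminus[OF whpoly.fst]] by (simp add: sigma_eq)
qed

lemma polyfun_comp_sigma: "polyfun f \<Longrightarrow> polyfun (\<lambda>p. f (sigma p))"
  using whpoly_comp_sigma[of 0 0 0 f] by simp

section \<open>Division by a coordinate\<close>

lemma whpoly_divide_fst:
  assumes "whpoly w m f"
  obtains g where "whpoly w (m - int (fst w)) g"
    and "\<And>p. f p = f (0, fst (snd p), snd (snd p)) + fst p * g p"
proof -
  have "\<exists>g. whpoly w (m - int (fst w)) g \<and> (\<forall>p. f p = f (0, fst (snd p), snd (snd p)) + fst p * g p)"
    using assms
  proof (induction rule: whpoly.induct)
    case fst
    show ?case by (intro exI[of _ "\<lambda>_. 1"]) (simp add: whpoly.const)
  next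
    case (add m f g)
    then obtain g1 g2 where g1: "whpoly w (m - int (fst w)) g1" "\<forall>p. f p = f (0, fst (snd p), snd (snd p)) + fst p * g1 p"
      and g2: "whpoly w (m - int (fst w)) g2" "\<forall>p. g p = g (0, fst (snd p), snd (snd p)) + fst p * g2 p"
      by blast
    show ?case
    proof (intro exI[of _ "\<lambda>p. g1 p + g2 p"] conjI allI)
      show "whpoly w (m - int (fst w)) (\<lambda>p. g1 p + g2 p)" using g1(1) g2(1) by (rule whpoly.add)
      fix p
      show "f p + g p = f (0, fst (snd p), snd (snd p)) + g (0, fst (snd p), snd (snd p)) + fst p * (g1 p + g2 p)"
        by (subst spec[OF g1(2)], subst spec[OF g2(2)]) (simp add: algebra_simps)
    qed
  next
    case (mult m f n g)
    then obtain g1 g2 where g1: "whpoly w (m - int (fst w)) g1" "\<forall>p. f p = f (0, fst (snd p), snd (snd p)) + fst p * g1 p"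
      and g2: "whpoly w (n - int (fst w)) g2" "\<forall>p. g p = g (0, fst (snd p), snd (snd p)) + fst p * g2 p"
      by blast
    let ?f0 = "\<lambda>p. f (0, fst (snd p), snd (snd p))"
    show ?case
    proof (intro exI[of _ "\<lambda>p. g1 p * g p + ?f0 p * g2 p"] conjI allI)
      have "whpoly w m ?f0"
        by (rule whpoly_comp[OF mult.hyps(1) whpoly.zero whpoly.fst_snd whpoly.snd_snd])
      then show "whpoly w (m + n - int (fst w)) (\<lambda>p. g1 p * g p + ?f0 p * g2 p)"
        by (intro whpoly.add whpoly_mult'[OF g1(1) mult.hyps(2)] whpoly_mult'[OF _ g2(1)]) simp_all
      fix p
      have "f p * g p = ?f0 p * g p + fst p * (g1 p * g p)"
        by (subst spec[OF g1(2)]) (simp add: algebra_simps)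
      also have "?f0 p * g p = ?f0 p * g (0, fst (snd p), snd (snd p)) + fst p * (?f0 p * g2 p)"
        by (subst spec[OF g2(2)]) (simp add: algebra_simps)
      finally show "f p * g p = f (0, fst (snd p), snd (snd p)) * g (0, fst (snd p), snd (snd p))
          + fst p * (g1 p * g p + ?f0 p * g2 p)"
        by (simp add: algebra_simps)
    qed
  qed (auto intro!: exI[of _ "\<lambda>_. 0"] whpoly.zero)
  then show thesis using that by blast
qed

lemma whpoly_divide_snd_snd:
  assumes "whpoly w m f"
  obtains g where "whpoly w (m - int (snd (snd w))) g"
    and "\<And>p. f p = f (fst p, fst (snd p), 0) + snd (snd p) * g p"
proof -
  let ?swap = "\<lambda>p::'a pt3. (snd (snd p), fst (snd p), fst p)"
  let ?w' = "(snd (snd w), fst (snd w), fst w)"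
  have "whpoly ?w' m (\<lambda>p. f (?swap p))"
    by (rule whpoly_comp[OF assms]) (auto intro: whpoly_fst' whpoly_fst_snd' whpoly_snd_snd')
  then obtain g where g: "whpoly ?w' (m - int (snd (snd w))) g"
    and eq: "\<And>p. f (?swap p) = f (snd (snd p), fst (snd p), 0) + fst p * g p"
    by (rule whpoly_divide_fst) auto
  show thesis
  proof (rule that)
    show "whpoly w (m - int (snd (snd w))) (\<lambda>p. g (?swap p))"
      by (rule whpoly_comp[OF g]) (auto intro: whpoly_fst' whpoly_fst_snd' whpoly_snd_snd')
    show "f p = f (fst p, fst (snd p), 0) + snd (snd p) * g (?swap p)" for p
      using eq[of "?swap p"] by simp
  qed
qed

lemma whpoly_divide_fst_snd:
  assumes "whpoly w m f"
  obtains g where "whpoly w (m - int (fst (snd w))) g"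
    and "\<And>p. f p = f (fst p, 0, snd (snd p)) + fst (snd p) * g p"
proof -
  let ?swap = "\<lambda>p::'a pt3. (fst (snd p), fst p, snd (snd p))"
  let ?w' = "(fst (snd w), fst w, snd (snd w))"
  have "whpoly ?w' m (\<lambda>p. f (?swap p))"
    by (rule whpoly_comp[OF assms]) (auto intro: whpoly_fst' whpoly_fst_snd' whpoly_snd_snd')
  then obtain g where g: "whpoly ?w' (m - int (fst (snd w))) g"
    and eq: "\<And>p. f (?swap p) = f (fst (snd p), 0, snd (snd p)) + fst p * g p"
    by (rule whpoly_divide_fst) auto
  show thesis
  proof (rule that)
    show "whpoly w (m - int (fst (snd w))) (\<lambda>p. g (?swap p))"
      by (rule whpoly_comp[OF g]) (auto intro: whpoly_fst' whpoly_fst_snd' whpoly_snd_snd')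
    show "f p = f (fst p, 0, snd (snd p)) + fst (snd p) * g (?swap p)" for p
      using eq[of "?swap p"] by simp
  qed
qed

lemma whpoly_vanishing_on_snd_axis:
  assumes f: "whpoly w m f" and f0: "\<And>b. f (0, b, 0) = 0"
  obtains g1 g3 where "whpoly w (m - int (fst w)) g1" "whpoly w (m - int (snd (snd w))) g3"
    and "\<And>p. f p = fst p * g1 p + snd (snd p) * g3 p"
proof -
  obtain g1 where g1: "whpoly w (m - int (fst w)) g1"
    and eq1: "\<And>p. f p = f (0, fst (snd p), snd (snd p)) + fst p * g1 p"
    using whpoly_divide_fst[OF f] by blast
  have "whpoly w m (\<lambda>p. f (0, fst (snd p), snd (snd p)))"
    by (rule whpoly_comp[OF f whpoly.zero whpoly.fst_snd whpoly.snd_snd])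
  then obtain g3 where g3: "whpoly w (m - int (snd (snd w))) g3"
    and eq3: "\<And>p. f (0, fst (snd p), snd (snd p)) = f (0, fst (snd p), 0) + snd (snd p) * g3 p"
    by (rule whpoly_divide_snd_snd) auto
  show thesis
    using that[OF g1 g3] eq1 eq3 f0 by (metis add.commute add_0)
qed

lemma whpoly_vanishing_on_two_axes:
  fixes f :: "'a::field_char_0 pt3 \<Rightarrow> 'a"
  assumes f: "whpoly w m f" and f0: "\<And>b. f (0, b, 0) = 0" "\<And>c. f (0, 0, c) = 0"
  obtains h where "whpoly w (m - int (fst (snd w)) - int (snd (snd w))) h"
    and "\<And>p. f (0, fst (snd p), snd (snd p)) = fst (snd p) * snd (snd p) * h p"
proof -
  have "whpoly w m (\<lambda>p. f (0, fst (snd p), snd (snd p)))"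
    by (rule whpoly_comp[OF f whpoly.zero whpoly.fst_snd whpoly.snd_snd])
  then obtain t where t: "whpoly w (m - int (snd (snd w))) t"
    and eq3: "\<And>p. f (0, fst (snd p), snd (snd p)) = f (0, fst (snd p), 0) + snd (snd p) * t p"
    by (rule whpoly_divide_snd_snd) auto
  obtain h where h: "whpoly w (m - int (snd (snd w)) - int (fst (snd w))) h"
    and eq2: "\<And>p. t p = t (fst p, 0, snd (snd p)) + fst (snd p) * h p"
    using whpoly_divide_fst_snd[OF t] by blast
  have t0_off: "t (a, 0, c) = 0" if "c \<noteq> 0" for a c
    using eq3[of "(a, 0, c)"] f0 that by simp
  have t0: "t (a, 0, c) = 0" for a c
  proof -
    have t': "polyfun (\<lambda>p. t (fst p, 0, snd (snd p)))"
      using polyfun_comp[OF whpoly_polyfun[OF t] polyfun_fst whpoly.zero polyfun_snd_snd] by simp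
    then have "t (a, 0, 0) = 0"
      using polyfun_vanishes_at_curve_0[OF t', of "[:a:]" 0 "[:0, 1:]"] t0_off by simp
    then show ?thesis using t0_off by (cases "c = 0") auto
  qed
  show thesis
  proof (rule that)
    show "whpoly w (m - int (fst (snd w)) - int (snd (snd w))) h" using h by (simp add: algebra_simps)
    show "f (0, fst (snd p), snd (snd p)) = fst (snd p) * snd (snd p) * h p" for p
      using eq3[of p] eq2[of p] f0(1) t0 by (simp add: algebra_simps)
  qed
qed

lemma whpoly_divide_fst_on_surfS':
  fixes E :: "'a::field_char_0 pt3 \<Rightarrow> 'a"
  assumes e: "e1 \<ge> 1" and E: "whpoly (wa, e1*wa, e1*wa) m E"
    and E0: "\<And>b. E (0, b, 0) = 0" "\<And>c. E (0, 0, c) = 0"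
  obtains g where "whpoly (wa, e1*wa, e1*wa) (m - int wa) g"
    and "\<And>p. p \<in> surfS' e1 \<Longrightarrow> E p = fst p * g p"
proof -
  let ?w = "(wa, e1*wa, e1*wa)"
  obtain g1 where g1: "whpoly ?w (m - int wa) g1"
    and eq1: "\<And>p. E p = E (0, fst (snd p), snd (snd p)) + fst p * g1 p"
    using whpoly_divide_fst[OF E] by auto
  obtain h where h: "whpoly ?w (m - int (e1*wa) - int (e1*wa)) h"
    and eq2: "\<And>p. E (0, fst (snd p), snd (snd p)) = fst (snd p) * snd (snd p) * h p"
    using whpoly_vanishing_on_two_axes[OF E E0] by auto
  let ?g = "\<lambda>p. g1 p + 1/4 * fst p ^ (2*e1 - 1) * h p"
  show thesis
  proof (rule that)
    have "whpoly ?w (0 + int (2*e1 - 1) * int wa + (m - int (e1*wa) - int (e1*wa))) (\<lambda>p. 1/4 * fst p ^ (2*e1 - 1) * h p)"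
      by (intro whpoly.mult whpoly.const h whpoly_power[OF whpoly.fst]) simp
    then show "whpoly ?w (m - int wa) ?g"
      using e by (intro whpoly.add[OF g1]) (simp add: of_nat_diff algebra_simps)
    fix p :: "'a pt3" assume p: "p \<in> surfS' e1"
    have "fst p * fst p ^ (2*e1 - 1) = fst p ^ (2*e1)"
      using e by (simp add: power_eq_if[of "fst p" "2*e1"])
    also have "\<dots> = 4 * fst (snd p) * snd (snd p)"
      using p by (cases p) (simp add: mem_surfS')
    finally show "E p = fst p * ?g p"
      using eq1[of p] eq2[of p] by (simp add: algebra_simps)
  qed
qed

lemma whpoly_divide_fst_on_surfS'_odd:
  fixes E :: "'a::field_char_0 pt3 \<Rightarrow> 'a"
  assumes e: "e1 \<ge> 1" and E: "whpoly (wa, e1*wa, e1*wa) m E"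
    and E0: "\<And>b. E (0, b, 0) = 0" "\<And>c. E (0, 0, c) = 0"
    and E_sigma: "\<And>p. E (sigma p) = E p"
  obtains g where "whpoly (wa, e1*wa, e1*wa) (m - int wa) g"
    and "\<And>p. p \<in> surfS' e1 \<Longrightarrow> E p = fst p * g p" and "\<And>p. g (sigma p) = - g p"
proof -
  obtain g where g: "whpoly (wa, e1*wa, e1*wa) (m - int wa) g"
    and eq: "\<And>p. p \<in> surfS' e1 \<Longrightarrow> E p = fst p * g p"
    using whpoly_divide_fst_on_surfS'[OF e E E0] by blast
  let ?g = "\<lambda>p. (g p - g (sigma p)) / 2"
  show thesis
  proof (rule that)
    have "whpoly (wa, e1*wa, e1*wa) (m - int wa + 0) (\<lambda>p. (g p - g (sigma p)) * (1/2))"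
      by (rule whpoly.mult[OF whpoly_diff[OF g whpoly_comp_sigma[OF g]] whpoly.const])
    then show "whpoly (wa, e1*wa, e1*wa) (m - int wa) ?g" by simp
    show "?g (sigma p) = - ?g p" for p :: "'a pt3" by (simp add: diff_divide_distrib)
    fix p :: "'a pt3" assume p: "p \<in> surfS' e1"
    have "E p = - fst p * g (sigma p)"
      using eq[OF sigma_in_surfS'[OF p]] E_sigma[of p] by (simp add: sigma_eq)
    moreover have "2 * (fst p * ?g p) = fst p * g p - fst p * g (sigma p)"
      by (simp add: right_diff_distrib)
    ultimately have "2 * (fst p * ?g p) = 2 * E p" using eq[OF p] by simp
    then show "E p = fst p * ?g p" by simp
  qed
qed

section \<open>Lifting a vector field tangent to S\<close>

definition surfS_poly :: "nat \<Rightarrow> 'a::comm_ring_1 pt3 \<Rightarrow> 'a" where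
  "surfS_poly e1 p = snd (snd p) ^ 2 + (fst p ^ e1 - fst (snd p) ^ 2) * fst p"

lemma polyfun_surfS_poly: "polyfun (surfS_poly e1)"
proof -
  have "polyfun (\<lambda>p. snd (snd p) ^ 2 + (fst p ^ e1 - fst (snd p) ^ 2) * fst p)"
    by (intro polyfun_intros)
  then show ?thesis by (simp add: surfS_poly_def[abs_def])
qed

lemma surfS_poly_eq_0: "p \<in> surfS e1 \<Longrightarrow> surfS_poly e1 p = 0"
  by (cases p) (simp add: surfS_poly_def mem_surfS)

lemma dderiv_surfS_poly:
  fixes p q :: "'a::field_char_0 pt3"
  assumes e: "e1 \<ge> 1"
  shows "dderiv (surfS_poly e1) p q = fst q * (of_nat (e1+1) * fst p ^ e1 - fst (snd p) ^ 2)
        - 2 * fst p * fst (snd p) * fst (snd q) + 2 * snd (snd p) * snd (snd q)"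
proof -
  have eq: "surfS_poly e1 = (\<lambda>x::'a pt3. snd (snd x) ^ 2 + (fst x ^ e1 - fst (snd x) ^ 2) * fst x)"
    by (simp add: surfS_poly_def[abs_def])
  have "polyfun (\<lambda>x. snd (snd x) ^ 2 :: 'a)" "polyfun (\<lambda>x. (fst x ^ e1 - fst (snd x) ^ 2) * fst x :: 'a)"
    "polyfun (\<lambda>x. fst x ^ e1 - fst (snd x) ^ 2 :: 'a)" "polyfun (\<lambda>x. fst x ^ e1 :: 'a)"
    "polyfun (\<lambda>x. fst (snd x) ^ 2 :: 'a)"
    by (intro polyfun_intros)+
  then have "dderiv (surfS_poly e1) p q = of_nat 2 * snd (snd p) ^ (2 - 1) * snd (snd q)
      + ((fst p ^ e1 - fst (snd p) ^ 2) * fst q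
         + fst p * (of_nat e1 * fst p ^ (e1 - 1) * fst q - of_nat 2 * fst (snd p) ^ (2 - 1) * fst (snd q)))"
    unfolding eq
    by (simp only: dderiv_add dderiv_mult dderiv_diff dderiv_power polyfun_fst polyfun_fst_snd
        polyfun_snd_snd dderiv_fst dderiv_fst_snd dderiv_snd_snd)
  moreover have "fst p * fst p ^ (e1 - 1) = fst p ^ e1"
    using e by (simp add: power_eq_if[of "fst p" e1])
  ultimately show ?thesis by (simp add: algebra_simps)
qed

lemma lift_fst_component:
  fixes A0 :: "'a::field_char_0 pt3 \<Rightarrow> 'a"
  assumes A0: "whpoly (2*wa, e1*wa, e1*wa+wa) (int (2*wa) + r) A0" and axis: "\<And>b. A0 (0, b, 0) = 0"
  obtains u where "whpoly (wa, e1*wa, e1*wa) (int wa + r) u"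
    and "\<And>p. 2 * fst p * u p = A0 (mapF p)" and "\<And>p. u (sigma p) = - u p"
proof -
  let ?wt = "(wa, e1*wa, e1*wa)"
  obtain g1 g3 where g1: "whpoly (2*wa, e1*wa, e1*wa+wa) r g1"
    and g3: "whpoly (2*wa, e1*wa, e1*wa+wa) (int wa + r - int (e1*wa)) g3"
    and A0_eq: "\<And>p. A0 p = fst p * g1 p + snd (snd p) * g3 p"
    using whpoly_vanishing_on_snd_axis[OF A0 axis] by (auto simp: algebra_simps)
  let ?u = "\<lambda>p. (fst p * g1 (mapF p) + (fst (snd p) - snd (snd p)) * g3 (mapF p)) / 2"
  show thesis
  proof (rule that)
    have "whpoly ?wt (int wa + r + 0)
        (\<lambda>p. (fst p * g1 (mapF p) + (fst (snd p) - snd (snd p)) * g3 (mapF p)) * (1/2))"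
      by (intro whpoly.mult whpoly.add whpoly.const whpoly_mult'[OF whpoly.fst whpoly_comp_mapF[OF g1]]
          whpoly_mult'[OF whpoly_diff whpoly_comp_mapF[OF g3]] whpoly_fst_snd' whpoly_snd_snd') simp_all
    then show "whpoly ?wt (int wa + r) ?u" by simp
    show "2 * fst p * ?u p = A0 (mapF p)" for p
    proof -
      have "2 * fst p * ?u p = fst p * (2 * ?u p)" by (simp only: mult_ac)
      also have "\<dots> = fst p * (fst p * g1 (mapF p) + (fst (snd p) - snd (snd p)) * g3 (mapF p))"
        by (simp only: times_divide_eq_right) simp
      also have "\<dots> = A0 (mapF p)"
        by (subst A0_eq) (simp add: mapF_eq power2_eq_square algebra_simps)
      finally show ?thesis .
    qed
    show "?u (sigma p) = - ?u p" for p
      by (simp only: mapF_sigma) (simp add: sigma_eq field_simps)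
  qed
qed

context
  fixes e1 :: nat and A0 B0 C0 :: "'a::field_char_0 pt3 \<Rightarrow> 'a"
  assumes e: "e1 \<ge> 1"
    and tangent: "\<And>x. x \<in> surfS e1 \<Longrightarrow> dderiv (surfS_poly e1) x (A0 x, B0 x, C0 x) = 0"
begin

lemma tangent_fst_vanishes_on_snd_axis:
  assumes A0: "polyfun A0"
  shows "A0 (0, b, 0) = 0"
proof -
  have off: "A0 (0, t, 0) = 0" if "t \<noteq> 0" for t
  proof -
    have "(0, t, 0) \<in> (surfS e1 :: 'a pt3 set)" by (simp add: mem_surfS)
    then have "A0 (0, t, 0) * (- (t^2)) = 0"
      using tangent dderiv_surfS_poly[OF e, of "(0, t, 0)" "(A0 (0, t, 0), B0 (0, t, 0), C0 (0, t, 0))"] e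
      by (simp add: power_0_left)
    then show ?thesis using that by simp
  qed
  then have "A0 (0, 0, 0) = 0"
    using polyfun_vanishes_at_curve_0[OF A0, of 0 "[:0,1:]" 0] by simp
  then show ?thesis using off by (cases "b = 0") auto
qed

text \<open>Pulled back along F, the tangency condition on S becomes the following
  equation on S', once the first component has been lifted to u and E collects
  what remains of the third one.\<close>

lemma surfS'_reduced_tangency:
  assumes polys: "polyfun u" "polyfun E" "polyfun B0"
    and u: "\<And>p. 2 * fst p * u p = A0 (mapF p)"
    and E: "\<And>p. C0 (mapF p) = E p + u p * (fst (snd p) - snd (snd p))"
    and p: "p \<in> surfS' e1"
  shows "of_nat e1 * fst p ^ (2*e1) * u p + (fst (snd p) - snd (snd p)) * E p
       - fst p * (fst (snd p) + snd (snd p)) * B0 (mapF p) = 0"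
    (is "?R p = 0")
proof (rule polyfun_vanishes_on_surfS'_of_fst[OF e _ _ p])
  show "polyfun ?R"
    using polys by (intro polyfun_intros polyfun_comp_mapF)
  fix p :: "'a pt3" assume p: "p \<in> surfS' e1" and a: "fst p \<noteq> 0"
  obtain a b c where abc: "p = (a,b,c)" by (cases p)
  have h: "a^(2*e1) = 4*b*c" using p abc by (simp add: mem_surfS')
  have "0 = dderiv (surfS_poly e1) (mapF p) (A0 (mapF p), B0 (mapF p), C0 (mapF p))"
    using tangent[OF mapF_in_surfS[OF p]] by simp
  also have "\<dots> = A0 (mapF p) * (of_nat (e1+1) * fst (mapF p) ^ e1 - fst (snd (mapF p)) ^ 2)
      - 2 * fst (mapF p) * fst (snd (mapF p)) * B0 (mapF p) + 2 * snd (snd (mapF p)) * C0 (mapF p)"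
    using dderiv_surfS_poly[OF e, of "mapF p" "(A0 (mapF p), B0 (mapF p), C0 (mapF p))"] by simp
  also have "\<dots> = 2 * a * u p * (of_nat (e1+1) * a^(2*e1) - (b+c)^2) - 2 * a^2 * (b+c) * B0 (mapF p)
        + 2 * (a * (b - c)) * (E p + u p * (b - c))"
    using u[of p] E[of p] abc by (simp add: mapF_eq power_mult[symmetric] mult.commute[of 2 e1])
  also have "\<dots> = 2 * (a * ?R p) + 2 * a * u p * (a^(2*e1) - 4*b*c)"
    using abc by (simp add: power2_eq_square algebra_simps)
  finally show "?R p = 0" using h a abc by simp
qed

end

lemma vanishes_on_axes_of_reduced_tangency:
  fixes E u B :: "'a::field_char_0 pt3 \<Rightarrow> 'a"
  assumes e: "e1 \<ge> 1" and E: "polyfun E"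
    and reduced: "\<And>p. p \<in> surfS' e1 \<Longrightarrow> of_nat e1 * fst p ^ (2*e1) * u p
        + (fst (snd p) - snd (snd p)) * E p - fst p * (fst (snd p) + snd (snd p)) * B p = 0"
  shows "E (0, b, 0) = 0" and "E (0, 0, c) = 0"
proof -
  have z: "(0::'a) ^ (2*e1) = 0" using e by simp
  have on_surfS': "(0, b, 0) \<in> surfS' e1" "(0, 0, c) \<in> surfS' e1" for b c :: 'a
    using z by (simp_all add: mem_surfS')
  have off: "E (0, t, 0) = 0" if "t \<noteq> 0" for t
    using reduced[OF on_surfS'(1)[of t]] that z by simp
  then have "E (0, 0, 0) = 0"
    using polyfun_vanishes_at_curve_0[OF E, of 0 "[:0,1:]" 0] by simp
  then show "E (0, b, 0) = 0" using off by (cases "b = 0") auto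
  show "E (0, 0, c) = 0"
    using reduced[OF on_surfS'(2)[of c]] z \<open>E (0, 0, 0) = 0\<close> by (cases "c = 0") auto
qed

lemma tangent_to_surfS'_of_reduced_tangency:
  fixes E E1 u v w B :: "'a::field_char_0 pt3 \<Rightarrow> 'a"
  assumes e: "e1 \<ge> 1" and polys: "polyfun u" "polyfun v" "polyfun w"
    and reduced: "\<And>p. p \<in> surfS' e1 \<Longrightarrow> of_nat e1 * fst p ^ (2*e1) * u p
        + (fst (snd p) - snd (snd p)) * E p - fst p * (fst (snd p) + snd (snd p)) * B p = 0"
    and E1: "\<And>p. p \<in> surfS' e1 \<Longrightarrow> E p = fst p * E1 p"
    and vw: "\<And>p. v p + w p = B p" "\<And>p. v p - w p = E1 p"
    and p: "p \<in> surfS' e1"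
  shows "dderiv (surfS'_poly e1) p (u p, v p, w p) = 0"
  unfolding dderiv_surfS'_poly fst_conv snd_conv
proof (rule polyfun_vanishes_on_surfS'_of_fst[OF e _ _ p])
  show "polyfun (\<lambda>p. of_nat (2*e1) * fst p ^ (2*e1 - 1) * u p - 4 * snd (snd p) * v p - 4 * fst (snd p) * w p)"
    using polys by (intro polyfun_intros)
  fix p :: "'a pt3" assume p: "p \<in> surfS' e1" and a: "fst p \<noteq> 0"
  have pw: "fst p ^ (2*e1) = fst p * fst p ^ (2*e1 - 1)"
    using e by (simp add: power_eq_if[of "fst p" "2*e1"])
  have "fst p * (of_nat (2*e1) * fst p ^ (2*e1 - 1) * u p - 4 * snd (snd p) * v p - 4 * fst (snd p) * w p)
      = 2 * (of_nat e1 * (fst p * fst p ^ (2*e1 - 1)) * u p + (fst (snd p) - snd (snd p)) * (fst p * (v p - w p))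
             - fst p * (fst (snd p) + snd (snd p)) * (v p + w p))"
    by (simp add: algebra_simps)
  also have "\<dots> = 2 * (of_nat e1 * fst p ^ (2*e1) * u p + (fst (snd p) - snd (snd p)) * E p
             - fst p * (fst (snd p) + snd (snd p)) * B p)"
    unfolding pw E1[OF p] vw by (rule refl)
  finally show "of_nat (2*e1) * fst p ^ (2*e1 - 1) * u p - 4 * snd (snd p) * v p - 4 * fst (snd p) * w p = 0"
    using reduced[OF p] a by simp
qed

lemma lift_snd_components:
  fixes B E1 :: "'a::field_char_0 pt3 \<Rightarrow> 'a"
  assumes B: "whpoly (2*wa, e1*wa, e1*wa+wa) (int (e1*wa) + r) B"
    and E1: "whpoly (wa, e1*wa, e1*wa) (int (e1*wa) + r) E1" and E1_sigma: "\<And>p. E1 (sigma p) = - E1 p"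
  obtains v w where "whpoly (wa, e1*wa, e1*wa) (int (e1*wa) + r) v" "whpoly (wa, e1*wa, e1*wa) (int (e1*wa) + r) w"
    and "\<And>p. v p + w p = B (mapF p)" "\<And>p. v p - w p = E1 p"
    and "\<And>p. v (sigma p) = w p" "\<And>p. w (sigma p) = v p"
proof
  let ?wt = "(wa, e1*wa, e1*wa)"
  have "whpoly ?wt (int (e1*wa) + r + 0) (\<lambda>p. (B (mapF p) + E1 p) * (1/2))"
    "whpoly ?wt (int (e1*wa) + r + 0) (\<lambda>p. (B (mapF p) - E1 p) * (1/2))"
    using whpoly.mult[OF whpoly.add[OF whpoly_comp_mapF[OF B] E1] whpoly.const[of _ "1/2"]]
      whpoly.mult[OF whpoly_diff[OF whpoly_comp_mapF[OF B] E1] whpoly.const[of _ "1/2"]] by simp_all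
  then show "whpoly ?wt (int (e1*wa) + r) (\<lambda>p. (B (mapF p) + E1 p) / 2)"
    "whpoly ?wt (int (e1*wa) + r) (\<lambda>p. (B (mapF p) - E1 p) / 2)"
    by simp_all
  show "(B (mapF p) + E1 p) / 2 + (B (mapF p) - E1 p) / 2 = B (mapF p)"
    "(B (mapF p) + E1 p) / 2 - (B (mapF p) - E1 p) / 2 = E1 p" for p
    by (simp_all add: field_simps)
  show "(B (mapF (sigma p)) + E1 (sigma p)) / 2 = (B (mapF p) - E1 p) / 2"
    "(B (mapF (sigma p)) - E1 (sigma p)) / 2 = (B (mapF p) + E1 p) / 2" for p
    by (simp_all add: E1_sigma)
qed

lemma lift_tangent_field:
  fixes A0 B0 C0 :: "'a::field_char_0 pt3 \<Rightarrow> 'a"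
  assumes e: "e1 \<ge> 1"
    and A0: "whpoly (2*wa, e1*wa, e1*wa+wa) (int (2*wa) + r) A0"
    and B0: "whpoly (2*wa, e1*wa, e1*wa+wa) (int (e1*wa) + r) B0"
    and C0: "whpoly (2*wa, e1*wa, e1*wa+wa) (int (e1*wa+wa) + r) C0"
    and tangent: "\<And>x. x \<in> surfS e1 \<Longrightarrow> dderiv (surfS_poly e1) x (A0 x, B0 x, C0 x) = 0"
  obtains u v w where "whpoly (wa, e1*wa, e1*wa) (int wa + r) u"
    "whpoly (wa, e1*wa, e1*wa) (int (e1*wa) + r) v" "whpoly (wa, e1*wa, e1*wa) (int (e1*wa) + r) w"
    and "\<And>p. p \<in> surfS' e1 \<Longrightarrow> 2 * fst p * u p = A0 (mapF p)"
    and "\<And>p. p \<in> surfS' e1 \<Longrightarrow> v p + w p = B0 (mapF p)"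
    and "\<And>p. p \<in> surfS' e1 \<Longrightarrow> fst p * (v p - w p) + (fst (snd p) - snd (snd p)) * u p = C0 (mapF p)"
    and "\<And>p. p \<in> surfS' e1 \<Longrightarrow> dderiv (surfS'_poly e1) p (u p, v p, w p) = 0"
    and "\<And>p. u (sigma p) = - u p" "\<And>p. v (sigma p) = w p" "\<And>p. w (sigma p) = v p"
proof -
  let ?wt = "(wa, e1*wa, e1*wa)"
  obtain u where u: "whpoly ?wt (int wa + r) u" and uA: "\<And>p. 2 * fst p * u p = A0 (mapF p)"
    and u_sigma: "\<And>p. u (sigma p) = - u p"
    using lift_fst_component[OF A0 tangent_fst_vanishes_on_snd_axis[OF e tangent whpoly_polyfun[OF A0]]]
    by blast
  define E where "E p = C0 (mapF p) - u p * (fst (snd p) - snd (snd p))" for p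
  have E: "whpoly ?wt (int (e1*wa) + int wa + r) E" unfolding E_def
    using whpoly_comp_mapF[OF C0]
    by (intro whpoly_diff whpoly_mult'[OF u whpoly_diff] whpoly_fst_snd' whpoly_snd_snd')
       (simp_all add: algebra_simps)
  have E_sigma: "E (sigma p) = E p" for p
    unfolding E_def u_sigma mapF_sigma by (simp add: sigma_eq algebra_simps)
  have reduced: "of_nat e1 * fst p ^ (2*e1) * u p + (fst (snd p) - snd (snd p)) * E p
       - fst p * (fst (snd p) + snd (snd p)) * B0 (mapF p) = 0" if "p \<in> surfS' e1" for p
    using surfS'_reduced_tangency[OF e tangent whpoly_polyfun[OF u] whpoly_polyfun[OF E]
      whpoly_polyfun[OF B0] uA _ that] by (simp add: E_def)
  obtain E1 where E1: "whpoly ?wt (int (e1*wa) + int wa + r - int wa) E1"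
    and E_E1: "\<And>p. p \<in> surfS' e1 \<Longrightarrow> E p = fst p * E1 p" and E1_sigma: "\<And>p. E1 (sigma p) = - E1 p"
    using whpoly_divide_fst_on_surfS'_odd[OF e E
      vanishes_on_axes_of_reduced_tangency[OF e whpoly_polyfun[OF E] reduced] E_sigma]
    by blast
  then have E1: "whpoly ?wt (int (e1*wa) + r) E1" by simp
  obtain v w where v: "whpoly ?wt (int (e1*wa) + r) v" and w: "whpoly ?wt (int (e1*wa) + r) w"
    and vw: "\<And>p. v p + w p = B0 (mapF p)" "\<And>p. v p - w p = E1 p"
    and vw_sigma: "\<And>p. v (sigma p) = w p" "\<And>p. w (sigma p) = v p"
    using lift_snd_components[OF B0 E1 E1_sigma] by blast
  show thesis
  proof (rule that[OF u v w])
    show "fst p * (v p - w p) + (fst (snd p) - snd (snd p)) * u p = C0 (mapF p)"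
      if "p \<in> surfS' e1" for p
      using E_E1[OF that] vw(2)[of p] by (simp add: E_def algebra_simps)
    show "dderiv (surfS'_poly e1) p (u p, v p, w p) = 0" if "p \<in> surfS' e1" for p
      by (rule tangent_to_surfS'_of_reduced_tangency[OF e whpoly_polyfun[OF u] whpoly_polyfun[OF v]
          whpoly_polyfun[OF w] reduced E_E1 vw that])
  qed (use uA vw u_sigma vw_sigma in auto)
qed

section \<open>The lifted derivation\<close>

lemma F_star_restr: "F_star e1 (restr (surfS e1) f) = restr (surfS' e1) (\<lambda>p. f (mapF p))"
  unfolding F_star_def by (rule restr_eqI) (simp add: restr_def mapF_in_surfS)

lemma sigma_star_restr: "sigma_star e1 (restr (surfS' e1) f) = restr (surfS' e1) (\<lambda>p. f (sigma p))"
  unfolding sigma_star_def by (rule restr_eqI) (simp add: restr_def sigma_in_surfS')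

lemma dderiv_comp_mapF:
  fixes f :: "'a::field_char_0 pt3 \<Rightarrow> 'a"
  assumes f: "polyfun f"
  shows "dderiv (\<lambda>x. f (mapF x)) p q = dderiv f (mapF p) (2 * fst p * fst q,
      fst (snd q) + snd (snd q), fst p * (fst (snd q) - snd (snd q)) + (fst (snd p) - snd (snd p)) * fst q)"
proof -
  have polys: "polyfun (\<lambda>x. fst x ^ 2 :: 'a)" "polyfun (\<lambda>x. fst (snd x) + snd (snd x) :: 'a)"
    "polyfun (\<lambda>x. fst (snd x) - snd (snd x) :: 'a)" "polyfun (\<lambda>x. fst x * (fst (snd x) - snd (snd x)) :: 'a)"
    by (intro polyfun_intros)+
  have "(\<lambda>x. f (mapF x)) = (\<lambda>x. f (fst x ^ 2, fst (snd x) + snd (snd x), fst x * (fst (snd x) - snd (snd x))))"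
    by (simp add: mapF_eq)
  then show ?thesis
    using polys
    by (simp add: dderiv_comp[OF f polys(1,2,4)] dderiv_power dderiv_add dderiv_mult dderiv_diff
        polyfun_intros mapF_eq)
qed

lemma dderiv_comp_sigma:
  fixes f :: "'a::field_char_0 pt3 \<Rightarrow> 'a"
  assumes f: "polyfun f"
  shows "dderiv (\<lambda>x. f (sigma x)) p q = dderiv f (sigma p) (- fst q, snd (snd q), fst (snd q))"
proof -
  have "(\<lambda>x. f (sigma x)) = (\<lambda>x. f (- fst x, snd (snd x), fst (snd x)))"
    by (simp add: sigma_eq)
  then show ?thesis
    by (simp add: dderiv_comp[OF f] dderiv_uminus polyfun_intros sigma_eq)
qed

lemma derivation_tangent:
  fixes D :: "('a::field_char_0 pt3 \<Rightarrow> 'a) \<Rightarrow> ('a pt3 \<Rightarrow> 'a)"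
  assumes D: "is_derivation S D" and h: "polyfun h" "\<And>x. x \<in> S \<Longrightarrow> h x = 0"
    and coords: "D (restr S (\<lambda>p. fst p)) = restr S A" "D (restr S (\<lambda>p. fst (snd p))) = restr S B"
      "D (restr S (\<lambda>p. snd (snd p))) = restr S C"
    and x: "x \<in> S"
  shows "dderiv h x (A x, B x, C x) = 0"
proof -
  have "restr S h = restr S (\<lambda>_. 0)" using h(2) by (rule restr_eqI)
  then have "restr S (\<lambda>p. dderiv h p (A p, B p, C p)) = (\<lambda>_. 0)"
    using derivation_restr_coords[OF D h(1) coords] derivation_restr_const[OF D, of 0] by simp
  then show ?thesis using x unfolding restr_def by metis
qed

lemma F_compatible_derivation_coords:
  fixes D D'' :: "('a::field_char_0 pt3 \<Rightarrow> 'a) \<Rightarrow> ('a pt3 \<Rightarrow> 'a)"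
  assumes D: "is_derivation (surfS e1) D" and D'': "is_derivation (surfS' e1) D''"
    and compat: "\<forall>f\<in>coord_ring (surfS e1). D'' (F_star e1 f) = F_star e1 (D f)"
    and coords: "D (restr (surfS e1) (\<lambda>p. fst p)) = restr (surfS e1) A"
      "D (restr (surfS e1) (\<lambda>p. fst (snd p))) = restr (surfS e1) B"
      "D (restr (surfS e1) (\<lambda>p. snd (snd p))) = restr (surfS e1) C"
    and coords'': "D'' (restr (surfS' e1) (\<lambda>p. fst p)) = restr (surfS' e1) a"
      "D'' (restr (surfS' e1) (\<lambda>p. fst (snd p))) = restr (surfS' e1) b"
      "D'' (restr (surfS' e1) (\<lambda>p. snd (snd p))) = restr (surfS' e1) c"
    and p: "p \<in> surfS' e1"
  shows "2 * fst p * a p = A (mapF p)" and "b p + c p = B (mapF p)"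
    and "fst p * (b p - c p) + (fst (snd p) - snd (snd p)) * a p = C (mapF p)"
proof -
  have "dderiv g (mapF p) (2 * fst p * a p, b p + c p, fst p * (b p - c p) + (fst (snd p) - snd (snd p)) * a p)
      = dderiv g (mapF p) (A (mapF p), B (mapF p), C (mapF p))" if g: "polyfun g" for g
  proof -
    have "D'' (F_star e1 (restr (surfS e1) g)) = F_star e1 (D (restr (surfS e1) g))"
      using compat restr_in_coord_ring[OF g] by blast
    then have "restr (surfS' e1) (\<lambda>p. dderiv (\<lambda>x. g (mapF x)) p (a p, b p, c p))
        = restr (surfS' e1) (\<lambda>p. dderiv g (mapF p) (A (mapF p), B (mapF p), C (mapF p)))"
      by (simp add: F_star_restr derivation_restr_coords[OF D'' polyfun_comp_mapF[OF g] coords'']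
          derivation_restr_coords[OF D g coords])
    then show ?thesis using restr_eqD[OF _ p] by (simp add: dderiv_comp_mapF[OF g] algebra_simps)
  qed
  from this[OF polyfun_fst] this[OF polyfun_fst_snd] this[OF polyfun_snd_snd]
  show "2 * fst p * a p = A (mapF p)" and "b p + c p = B (mapF p)"
    and "fst p * (b p - c p) + (fst (snd p) - snd (snd p)) * a p = C (mapF p)"
    by simp_all
qed

lemma surfS'_lift_unique:
  fixes a b c u v w :: "'a::field_char_0 pt3 \<Rightarrow> 'a"
  assumes e: "e1 \<ge> 1" and polys: "polyfun a" "polyfun b" "polyfun c" "polyfun u" "polyfun v" "polyfun w"
    and eqs: "\<And>p. p \<in> surfS' e1 \<Longrightarrow> fst p * a p = fst p * u p"
      "\<And>p. p \<in> surfS' e1 \<Longrightarrow> b p + c p = v p + w p"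
      "\<And>p. p \<in> surfS' e1 \<Longrightarrow> fst p * (b p - c p) + (fst (snd p) - snd (snd p)) * a p
         = fst p * (v p - w p) + (fst (snd p) - snd (snd p)) * u p"
    and p: "p \<in> surfS' e1"
  shows "a p = u p \<and> b p = v p \<and> c p = w p"
proof -
  have au: "a q - u q = 0" if "q \<in> surfS' e1" for q :: "'a pt3"
    by (rule polyfun_vanishes_on_surfS'_of_fst[OF e whpoly_diff[OF polys(1,4)] _ that])
      (use eqs(1) in \<open>auto simp: right_diff_distrib[symmetric]\<close>)
  have "(b p - c p) - (v p - w p) = 0"
  proof (rule polyfun_vanishes_on_surfS'_of_fst[OF e _ _ p, where g = "\<lambda>p. (b p - c p) - (v p - w p)"])
    show "polyfun (\<lambda>p. (b p - c p) - (v p - w p))" using polys by (intro polyfun_intros)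
    fix q :: "'a pt3" assume q: "q \<in> surfS' e1" and "fst q \<noteq> 0"
    then show "(b q - c q) - (v q - w q) = 0" using eqs(3)[OF q] au[OF q] by simp
  qed
  then have "2 * b p = (b p + c p) + (v p - w p)" by (simp add: algebra_simps)
  also have "\<dots> = 2 * v p" using eqs(2)[OF p] by simp
  finally have "2 * b p = 2 * v p" .
  then show ?thesis using au[OF p] eqs(2)[OF p] by simp
qed

text \<open>The choice of the representative of g is harmless once (u, v, w) is tangent to S
  (vf_derivation_restr).\<close>

definition vf_derivation :: "'a::comm_ring_1 pt3 set \<Rightarrow> ('a pt3 \<Rightarrow> 'a) \<Rightarrow> ('a pt3 \<Rightarrow> 'a) \<Rightarrow> ('a pt3 \<Rightarrow> 'a)
    \<Rightarrow> ('a pt3 \<Rightarrow> 'a) \<Rightarrow> ('a pt3 \<Rightarrow> 'a)" where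
  "vf_derivation S u v w g = restr S (\<lambda>p. dderiv (SOME f. polyfun f \<and> g = restr S f) p (u p, v p, w p))"

context
  fixes e1 :: nat and u v w :: "'a::field_char_0 pt3 \<Rightarrow> 'a"
  assumes e: "e1 \<ge> 1" and polys: "polyfun u" "polyfun v" "polyfun w"
    and tangent: "\<And>p. p \<in> surfS' e1 \<Longrightarrow> dderiv (surfS'_poly e1) p (u p, v p, w p) = 0"
begin

lemma vf_derivation_restr:
  assumes f: "polyfun f"
  shows "vf_derivation (surfS' e1) u v w (restr (surfS' e1) f)
       = restr (surfS' e1) (\<lambda>p. dderiv f p (u p, v p, w p))"
proof -
  let ?S = "surfS' e1 :: 'a pt3 set"
  let ?f = "SOME f'. polyfun f' \<and> restr ?S f = restr ?S f'"
  have "\<exists>f'. polyfun f' \<and> restr ?S f = restr ?S f'" using f by blast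
  then have f': "polyfun ?f" "restr ?S f = restr ?S ?f" by (metis (mono_tags, lifting) someI_ex)+
  have "dderiv ?f p (u p, v p, w p) = dderiv f p (u p, v p, w p)" if "p \<in> ?S" for p
    by (rule dderiv_cong_surfS'[OF e f'(1) f restr_eqD[OF f'(2), symmetric] polys tangent that])
  then show ?thesis unfolding vf_derivation_def by (rule restr_eqI)
qed

lemma is_derivation_vf_derivation: "is_derivation (surfS' e1) (vf_derivation (surfS' e1) u v w)"
  unfolding is_derivation_def
proof (intro conjI ballI allI)
  let ?S = "surfS' e1 :: 'a pt3 set" and ?D = "vf_derivation (surfS' e1) u v w"
  fix f assume "f \<in> coord_ring ?S"
  then obtain f0 where f0: "polyfun f0" "f = restr ?S f0" using coord_ring_iff_polyfun by blast
  show "?D f \<in> coord_ring ?S"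
    unfolding f0(2) vf_derivation_restr[OF f0(1)] by (rule restr_in_coord_ring[OF polyfun_dderiv[OF f0(1) polys]])
  fix c
  have "?D (\<lambda>p. c * f p) = restr ?S (\<lambda>p. dderiv (\<lambda>x. c * f0 x) p (u p, v p, w p))"
    unfolding f0(2) restr_scale[symmetric] by (rule vf_derivation_restr[OF whpoly_scale[OF f0(1)]])
  also have "\<dots> = (\<lambda>p. c * ?D f p)"
    unfolding f0(2) vf_derivation_restr[OF f0(1)] dderiv_scale[OF f0(1)] restr_scale ..
  finally show "?D (\<lambda>p. c * f p) = (\<lambda>p. c * ?D f p)" .
  fix g assume "g \<in> coord_ring ?S"
  then obtain g0 where g0: "polyfun g0" "g = restr ?S g0" using coord_ring_iff_polyfun by blast
  have "?D (\<lambda>p. f p + g p) = restr ?S (\<lambda>p. dderiv (\<lambda>x. f0 x + g0 x) p (u p, v p, w p))"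
    unfolding f0(2) g0(2) restr_add[symmetric] by (rule vf_derivation_restr[OF whpoly.add[OF f0(1) g0(1)]])
  also have "\<dots> = (\<lambda>p. ?D f p + ?D g p)"
    unfolding f0(2) g0(2) vf_derivation_restr[OF f0(1)] vf_derivation_restr[OF g0(1)]
      dderiv_add[OF f0(1) g0(1)] restr_add ..
  finally show "?D (\<lambda>p. f p + g p) = (\<lambda>p. ?D f p + ?D g p)" .
  have "?D (\<lambda>p. f p * g p) = restr ?S (\<lambda>p. dderiv (\<lambda>x. f0 x * g0 x) p (u p, v p, w p))"
    unfolding f0(2) g0(2) restr_mult[symmetric] by (rule vf_derivation_restr[OF polyfun_mult[OF f0(1) g0(1)]])
  also have "\<dots> = (\<lambda>p. f p * ?D g p + g p * ?D f p)"
    unfolding f0(2) g0(2) vf_derivation_restr[OF f0(1)] vf_derivation_restr[OF g0(1)]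
      dderiv_mult[OF f0(1) g0(1)] restr_add restr_mult ..
  finally show "?D (\<lambda>p. f p * g p) = (\<lambda>p. f p * ?D g p + g p * ?D f p)" .
qed

lemma vf_derivation_sigma_star:
  assumes sym: "\<And>p. u (sigma p) = - u p" "\<And>p. v (sigma p) = w p" "\<And>p. w (sigma p) = v p"
    and f: "f \<in> coord_ring (surfS' e1)"
  shows "vf_derivation (surfS' e1) u v w (sigma_star e1 f) = sigma_star e1 (vf_derivation (surfS' e1) u v w f)"
proof -
  obtain f0 where f0: "polyfun f0" "f = restr (surfS' e1) f0" using f coord_ring_iff_polyfun by blast
  have "vf_derivation (surfS' e1) u v w (sigma_star e1 f)
      = restr (surfS' e1) (\<lambda>p. dderiv f0 (sigma p) (- u p, w p, v p))"
    unfolding f0(2) sigma_star_restr vf_derivation_restr[OF polyfun_comp_sigma[OF f0(1)]]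
      dderiv_comp_sigma[OF f0(1)] by simp
  also have "\<dots> = sigma_star e1 (vf_derivation (surfS' e1) u v w f)"
    unfolding f0(2) vf_derivation_restr[OF f0(1)] sigma_star_restr sym ..
  finally show ?thesis .
qed

lemma vf_derivation_F_star:
  fixes D :: "('a pt3 \<Rightarrow> 'a) \<Rightarrow> ('a pt3 \<Rightarrow> 'a)"
  assumes D: "is_derivation (surfS e1) D"
    and coords: "D (restr (surfS e1) (\<lambda>p. fst p)) = restr (surfS e1) A"
      "D (restr (surfS e1) (\<lambda>p. fst (snd p))) = restr (surfS e1) B"
      "D (restr (surfS e1) (\<lambda>p. snd (snd p))) = restr (surfS e1) C"
    and lift: "\<And>p. p \<in> surfS' e1 \<Longrightarrow> 2 * fst p * u p = A (mapF p)"
      "\<And>p. p \<in> surfS' e1 \<Longrightarrow> v p + w p = B (mapF p)"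
      "\<And>p. p \<in> surfS' e1 \<Longrightarrow> fst p * (v p - w p) + (fst (snd p) - snd (snd p)) * u p = C (mapF p)"
    and f: "f \<in> coord_ring (surfS e1)"
  shows "vf_derivation (surfS' e1) u v w (F_star e1 f) = F_star e1 (D f)"
proof -
  obtain f0 where f0: "polyfun f0" "f = restr (surfS e1) f0" using f coord_ring_iff_polyfun by blast
  have "vf_derivation (surfS' e1) u v w (F_star e1 f)
      = restr (surfS' e1) (\<lambda>p. dderiv f0 (mapF p) (2 * fst p * u p, v p + w p,
          fst p * (v p - w p) + (fst (snd p) - snd (snd p)) * u p))"
    unfolding f0(2) F_star_restr vf_derivation_restr[OF polyfun_comp_mapF[OF f0(1)]]
      dderiv_comp_mapF[OF f0(1)] by (simp add: algebra_simps)
  also have "\<dots> = restr (surfS' e1) (\<lambda>p. dderiv f0 (mapF p) (A (mapF p), B (mapF p), C (mapF p)))"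
    by (rule restr_eqI) (simp add: lift)
  also have "\<dots> = F_star e1 (D f)"
    unfolding f0(2) derivation_restr_coords[OF D f0(1) coords] F_star_restr ..
  finally show ?thesis .
qed

lemma vf_derivation_unique:
  fixes D D'' :: "('a pt3 \<Rightarrow> 'a) \<Rightarrow> ('a pt3 \<Rightarrow> 'a)"
  assumes D: "is_derivation (surfS e1) D"
    and coords: "D (restr (surfS e1) (\<lambda>p. fst p)) = restr (surfS e1) A"
      "D (restr (surfS e1) (\<lambda>p. fst (snd p))) = restr (surfS e1) B"
      "D (restr (surfS e1) (\<lambda>p. snd (snd p))) = restr (surfS e1) C"
    and lift: "\<And>p. p \<in> surfS' e1 \<Longrightarrow> 2 * fst p * u p = A (mapF p)"
      "\<And>p. p \<in> surfS' e1 \<Longrightarrow> v p + w p = B (mapF p)"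
      "\<And>p. p \<in> surfS' e1 \<Longrightarrow> fst p * (v p - w p) + (fst (snd p) - snd (snd p)) * u p = C (mapF p)"
    and D'': "is_derivation (surfS' e1) D''"
    and compat: "\<forall>f\<in>coord_ring (surfS e1). D'' (F_star e1 f) = F_star e1 (D f)"
    and f: "f \<in> coord_ring (surfS' e1)"
  shows "D'' f = vf_derivation (surfS' e1) u v w f"
proof -
  let ?S' = "surfS' e1 :: 'a pt3 set"
  obtain a b c where abc: "polyfun a" "polyfun b" "polyfun c"
    and coords'': "D'' (restr ?S' (\<lambda>p. fst p)) = restr ?S' a"
      "D'' (restr ?S' (\<lambda>p. fst (snd p))) = restr ?S' b" "D'' (restr ?S' (\<lambda>p. snd (snd p))) = restr ?S' c"
    using derivation_in_coord_ring[OF D'' restr_in_coord_ring] polyfun_fst polyfun_fst_snd polyfun_snd_snd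
    unfolding coord_ring_iff_polyfun by metis
  note F_coords = F_compatible_derivation_coords[OF D D'' compat coords coords'']
  have same: "a p = u p \<and> b p = v p \<and> c p = w p" if p: "p \<in> ?S'" for p :: "'a pt3"
  proof (rule surfS'_lift_unique[OF e abc polys _ _ _ p])
    fix q :: "'a pt3" assume q: "q \<in> ?S'"
    have "2 * (fst q * a q) = 2 * (fst q * u q)" using F_coords(1)[OF q] lift(1)[OF q] by (simp add: mult.assoc)
    then show "fst q * a q = fst q * u q" by simp
  qed (simp_all add: F_coords lift)
  obtain f0 where f0: "polyfun f0" "f = restr ?S' f0" using f coord_ring_iff_polyfun by blast
  show ?thesis
    unfolding f0(2) derivation_restr_coords[OF D'' f0(1) coords''] vf_derivation_restr[OF f0(1)]
    by (rule restr_eqI) (simp add: same)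
qed

lemma whom_derivation_vf_derivation:
  assumes "whpoly (1, e1, e1) (1 + r) u" "whpoly (1, e1, e1) (int e1 + r) v" "whpoly (1, e1, e1) (int e1 + r) w"
  shows "whom_derivation (surfS' e1) (1, e1, e1) (vf_derivation (surfS' e1) u v w)"
  unfolding whom_derivation_def
proof (intro exI[of _ r] allI impI)
  fix m and f :: "'a pt3 \<Rightarrow> 'a" assume "whom (surfS' e1) (1, e1, e1) m f"
  then obtain g where g: "whpoly (1, e1, e1) m g" "f = restr (surfS' e1) g" unfolding whom_iff_whpoly by blast
  have "whpoly (1, e1, e1) (m + r) (\<lambda>p. dderiv g p (u p, v p, w p))"
    using assms by (intro whpoly_dderiv[OF g(1)]) simp_all
  then show "whom (surfS' e1) (1, e1, e1) (m + r) (vf_derivation (surfS' e1) u v w f)"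
    unfolding g(2) vf_derivation_restr[OF whpoly_polyfun[OF g(1)]] whom_iff_whpoly by blast
qed

end

text \<open>With wa = 0 every polynomial function is homogeneous of degree 0, so this also covers
  derivations that are not weighted homogeneous.\<close>

lemma derivation_coordinate_representatives:
  fixes D :: "('a::comm_ring_1 pt3 \<Rightarrow> 'a) \<Rightarrow> ('a pt3 \<Rightarrow> 'a)"
  assumes D: "is_derivation (surfS e1) D"
  obtains wa r A B C where "whpoly (2*wa, e1*wa, e1*wa+wa) (int (2*wa) + r) A"
    "whpoly (2*wa, e1*wa, e1*wa+wa) (int (e1*wa) + r) B"
    "whpoly (2*wa, e1*wa, e1*wa+wa) (int (e1*wa+wa) + r) C"
    and "D (restr (surfS e1) (\<lambda>p. fst p)) = restr (surfS e1) A"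
      "D (restr (surfS e1) (\<lambda>p. fst (snd p))) = restr (surfS e1) B"
      "D (restr (surfS e1) (\<lambda>p. snd (snd p))) = restr (surfS e1) C"
    and "whom_derivation (surfS e1) (2, e1, e1 + 1) D \<Longrightarrow> wa = 1"
proof (cases "whom_derivation (surfS e1) (2, e1, e1 + 1) D")
  case True
  then obtain r where r: "\<And>m f. whom (surfS e1) (2, e1, e1 + 1) m f
      \<Longrightarrow> whom (surfS e1) (2, e1, e1 + 1) (m + r) (D f)"
    unfolding whom_derivation_def by blast
  have "whpoly (2, e1, e1 + 1) 2 (\<lambda>p. fst p)" "whpoly (2, e1, e1 + 1) (int e1) (\<lambda>p. fst (snd p))"
    "whpoly (2, e1, e1 + 1) (int (e1 + 1)) (\<lambda>p. snd (snd p))"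
    by (auto intro: whpoly_fst' whpoly_fst_snd' whpoly_snd_snd')
  then have "whom (surfS e1) (2, e1, e1 + 1) 2 (restr (surfS e1) (\<lambda>p. fst p))"
    "whom (surfS e1) (2, e1, e1 + 1) (int e1) (restr (surfS e1) (\<lambda>p. fst (snd p)))"
    "whom (surfS e1) (2, e1, e1 + 1) (int (e1 + 1)) (restr (surfS e1) (\<lambda>p. snd (snd p)))"
    unfolding whom_iff_whpoly by blast+
  then have "whom (surfS e1) (2, e1, e1 + 1) (2 + r) (D (restr (surfS e1) (\<lambda>p. fst p)))"
    "whom (surfS e1) (2, e1, e1 + 1) (int e1 + r) (D (restr (surfS e1) (\<lambda>p. fst (snd p))))"
    "whom (surfS e1) (2, e1, e1 + 1) (int (e1 + 1) + r) (D (restr (surfS e1) (\<lambda>p. snd (snd p))))"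
    using r by blast+
  then obtain A B C where "whpoly (2, e1, e1 + 1) (2 + r) A" "whpoly (2, e1, e1 + 1) (int e1 + r) B"
      "whpoly (2, e1, e1 + 1) (int (e1 + 1) + r) C"
    "D (restr (surfS e1) (\<lambda>p. fst p)) = restr (surfS e1) A"
    "D (restr (surfS e1) (\<lambda>p. fst (snd p))) = restr (surfS e1) B"
    "D (restr (surfS e1) (\<lambda>p. snd (snd p))) = restr (surfS e1) C"
    unfolding whom_iff_whpoly by blast
  then show thesis by (intro that[of 1 r A B C]) simp_all
next
  case False
  obtain A B C where "polyfun A" "polyfun B" "polyfun C"
    "D (restr (surfS e1) (\<lambda>p. fst p)) = restr (surfS e1) A"
    "D (restr (surfS e1) (\<lambda>p. fst (snd p))) = restr (surfS e1) B"
    "D (restr (surfS e1) (\<lambda>p. snd (snd p))) = restr (surfS e1) C"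
    using derivation_in_coord_ring[OF D restr_in_coord_ring] polyfun_fst polyfun_fst_snd polyfun_snd_snd
    unfolding coord_ring_iff_polyfun by metis
  then show thesis using False by (intro that[of 0 0 A B C]) simp_all
qed

theorem lemma11:
  fixes D :: "('a::{alg_closed_field, field_char_0} pt3 \<Rightarrow> 'a) \<Rightarrow> ('a pt3 \<Rightarrow> 'a)"
    and e1 :: nat
  assumes e1: "e1 \<ge> 3" "odd e1"
    and D: "is_derivation (surfS e1) D"
  shows "\<exists>D'. is_derivation (surfS' e1) D'
           \<and> (\<forall>f\<in>coord_ring (surfS' e1). D' (sigma_star e1 f) = sigma_star e1 (D' f))
           \<and> (\<forall>f\<in>coord_ring (surfS e1). D' (F_star e1 f) = F_star e1 (D f))
           \<and> (\<forall>D''. is_derivation (surfS' e1) D''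
                  \<and> (\<forall>f\<in>coord_ring (surfS' e1). D'' (sigma_star e1 f) = sigma_star e1 (D'' f))
                  \<and> (\<forall>f\<in>coord_ring (surfS e1). D'' (F_star e1 f) = F_star e1 (D f))
                  \<longrightarrow> (\<forall>f\<in>coord_ring (surfS' e1). D'' f = D' f))
           \<and> (whom_derivation (surfS e1) (2, e1, e1 + 1) D
                  \<longrightarrow> whom_derivation (surfS' e1) (1, e1, e1) D')"
proof -
  have e: "e1 \<ge> 1" using e1 by simp
  obtain wa r A B C where ABC: "whpoly (2*wa, e1*wa, e1*wa+wa) (int (2*wa) + r) A"
      "whpoly (2*wa, e1*wa, e1*wa+wa) (int (e1*wa) + r) B" "whpoly (2*wa, e1*wa, e1*wa+wa) (int (e1*wa+wa) + r) C"
    and coords: "D (restr (surfS e1) (\<lambda>p. fst p)) = restr (surfS e1) A"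
      "D (restr (surfS e1) (\<lambda>p. fst (snd p))) = restr (surfS e1) B"
      "D (restr (surfS e1) (\<lambda>p. snd (snd p))) = restr (surfS e1) C"
    and hom: "whom_derivation (surfS e1) (2, e1, e1 + 1) D \<Longrightarrow> wa = 1"
    using derivation_coordinate_representatives[OF D] by blast
  have "dderiv (surfS_poly e1) x (A x, B x, C x) = 0" if "x \<in> surfS e1" for x
    by (rule derivation_tangent[OF D polyfun_surfS_poly surfS_poly_eq_0 coords that])
  then obtain u v w where uvw: "whpoly (wa, e1*wa, e1*wa) (int wa + r) u"
      "whpoly (wa, e1*wa, e1*wa) (int (e1*wa) + r) v" "whpoly (wa, e1*wa, e1*wa) (int (e1*wa) + r) w"
    and lift: "\<And>p. p \<in> surfS' e1 \<Longrightarrow> 2 * fst p * u p = A (mapF p)"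
      "\<And>p. p \<in> surfS' e1 \<Longrightarrow> v p + w p = B (mapF p)"
      "\<And>p. p \<in> surfS' e1 \<Longrightarrow> fst p * (v p - w p) + (fst (snd p) - snd (snd p)) * u p = C (mapF p)"
    and tangent: "\<And>p. p \<in> surfS' e1 \<Longrightarrow> dderiv (surfS'_poly e1) p (u p, v p, w p) = 0"
    and sym: "\<And>p. u (sigma p) = - u p" "\<And>p. v (sigma p) = w p" "\<And>p. w (sigma p) = v p"
    using lift_tangent_field[OF e ABC] by blast
  note polys = uvw[THEN whpoly_polyfun]
  have hom': "whom_derivation (surfS' e1) (1, e1, e1) (vf_derivation (surfS' e1) u v w)"
    if "whom_derivation (surfS e1) (2, e1, e1 + 1) D"
    using whom_derivation_vf_derivation[OF e polys tangent] uvw hom[OF that] by simp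
  show ?thesis
    using is_derivation_vf_derivation[OF e polys tangent] vf_derivation_sigma_star[OF e polys tangent sym]
      vf_derivation_F_star[OF e polys tangent D coords lift]
      vf_derivation_unique[OF e polys tangent D coords lift] hom'
    by (intro exI[of _ "vf_derivation (surfS' e1) u v w"]) blast
qed

end
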